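(* Let $\mathcal M$ and $\mathcal N$ be von Neumann algebras and suppose that the completely bounded bilinear operator $\phi:\mathcal M\times\mathcal M\to\mathcal N$ has a factorization of type B. Then there exist continuous completely positive bilinear maps $\phi_k:\mathcal M\times\mathcal M\to\mathcal N$, $1\le k\le 4$, such that $\phi=(\phi_1-\phi_2)+i(\phi_3-\phi_4)$.
   Context: A factorization of type B of $\phi$ consists of completely bounded linear maps $\psi_j,\theta_j:\mathcal M\to\mathcal N$, $j\in\Lambda$, and a constant $K$ such that $\|\sum_{j\in F}\psi_j(x)\psi_j(x)^*\|\le K\|x\|^2$ and $\|\sum_{j\in F}\theta_j(y)^*\theta_j(y)\|\le K\|y\|^2$ for all $x,y\in\mathcal M$ and all finite $F\subseteq\Lambda$, and $\phi(x,y)=\sum_{j\in\Lambda}\psi_j(x)\theta_j(y)$ (weakly convergent) for all $x,y\in\mathcal M$. A bilinear map $\phi$ on $\mathcal M\times\mathcal M$ is completely positive if $\phi_n((x_{ij}),(x_{ij})^* )\ge0$ for all $(x_{ij})\in\mathbb M_n(\mathcal M)$, $n\in\mathbb N$, where $\phi_n((x_{ij}),(y_{ij}))=(\sum_{k=1}^n\phi(x_{ik},y_{kj}))$ and $(x_{ij})^*$ is the adjoint matrix. *)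

theory Defs
  imports "HOL-Analysis.Analysis"
begin

text \<open>Concrete Hilbert spaces: every complex Hilbert space is unitarily isomorphic to
  l2(I) for some index set I; we take I to be a type 'a.
  Bounded operators are maps on all functions that are linear and bounded on l2,
  preserve l2, and vanish off l2 (a normalisation giving unique representatives).\<close>

type_synonym 'a vec = "'a \<Rightarrow> complex"
type_synonym 'a op = "'a vec \<Rightarrow> 'a vec"

definition l2 :: "'a vec set" where
  "l2 = {\<xi>. (\<lambda>i. (cmod (\<xi> i))\<^sup>2) summable_on UNIV}"

definition cinner :: "'a vec \<Rightarrow> 'a vec \<Rightarrow> complex" where
  "cinner \<xi> \<eta> = (\<Sum>\<^sub>\<infinity>i. cnj (\<xi> i) * \<eta> i)"

definition l2norm :: "'a vec \<Rightarrow> real" where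
  "l2norm \<xi> = sqrt (\<Sum>\<^sub>\<infinity>i. (cmod (\<xi> i))\<^sup>2)"

definition bop :: "'a op set" where
  "bop = {T. T ` l2 \<subseteq> l2
      \<and> (\<forall>\<xi>\<in>l2. \<forall>\<eta>\<in>l2. \<forall>a. T (\<lambda>i. a * \<xi> i + \<eta> i) = (\<lambda>i. a * T \<xi> i + T \<eta> i))
      \<and> (\<exists>C. \<forall>\<xi>\<in>l2. l2norm (T \<xi>) \<le> C * l2norm \<xi>)
      \<and> (\<forall>\<xi>. \<xi> \<notin> l2 \<longrightarrow> T \<xi> = (\<lambda>i. 0))}"

definition opnorm :: "'a op \<Rightarrow> real" where
  "opnorm T = Sup {l2norm (T \<xi>) | \<xi>. \<xi> \<in> l2 \<and> l2norm \<xi> \<le> 1}"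

definition idop :: "'a op" where
  "idop = (\<lambda>\<xi>. if \<xi> \<in> l2 then \<xi> else (\<lambda>i. 0))"

definition op_add :: "'a op \<Rightarrow> 'a op \<Rightarrow> 'a op" where
  "op_add S T = (\<lambda>\<xi> i. S \<xi> i + T \<xi> i)"

definition op_scale :: "complex \<Rightarrow> 'a op \<Rightarrow> 'a op" where
  "op_scale c T = (\<lambda>\<xi> i. c * T \<xi> i)"

text \<open>Hilbert space adjoint (exists by the Riesz representation theorem).\<close>
definition adj :: "'a op \<Rightarrow> 'a op" where
  "adj T = (\<lambda>\<eta>. if \<eta> \<in> l2 then
      (THE \<zeta>. \<zeta> \<in> l2 \<and> (\<forall>\<xi>\<in>l2. cinner (T \<xi>) \<eta> = cinner \<xi> \<zeta>))
    else (\<lambda>i. 0))"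

definition commutant :: "'a op set \<Rightarrow> 'a op set" where
  "commutant S = {T \<in> bop. \<forall>A\<in>S. A \<circ> T = T \<circ> A}"

text \<open>von Neumann algebra: a self-adjoint set of bounded operators equal to its
  double commutant (von Neumann's bicommutant characterisation).\<close>
definition von_neumann_algebra :: "'a op set \<Rightarrow> bool" where
  "von_neumann_algebra M \<longleftrightarrow> M \<subseteq> bop \<and> (\<forall>T\<in>M. adj T \<in> M)
      \<and> commutant (commutant M) = M"

definition mats :: "nat \<Rightarrow> 'a op set \<Rightarrow> (nat \<Rightarrow> nat \<Rightarrow> 'a op) set" where
  "mats n M = {X. \<forall>i<n. \<forall>j<n. X i j \<in> M}"

definition mat_apply :: "nat \<Rightarrow> (nat \<Rightarrow> nat \<Rightarrow> 'a op) \<Rightarrow> (nat \<Rightarrow> 'a vec) \<Rightarrow> nat \<Rightarrow> 'a vec" where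
  "mat_apply n X \<xi> = (\<lambda>i k. \<Sum>j<n. X i j (\<xi> j) k)"

definition mnorm :: "nat \<Rightarrow> (nat \<Rightarrow> nat \<Rightarrow> 'a op) \<Rightarrow> real" where
  "mnorm n X = Sup {sqrt (\<Sum>i<n. (l2norm (mat_apply n X \<xi> i))\<^sup>2) | \<xi>.
      (\<forall>j<n. \<xi> j \<in> l2) \<and> (\<Sum>j<n. (l2norm (\<xi> j))\<^sup>2) \<le> 1}"

definition mpos :: "nat \<Rightarrow> (nat \<Rightarrow> nat \<Rightarrow> 'a op) \<Rightarrow> bool" where
  "mpos n X \<longleftrightarrow> (\<forall>\<xi>. (\<forall>j<n. \<xi> j \<in> l2) \<longrightarrow>
      (let q = (\<Sum>i<n. cinner (\<xi> i) (mat_apply n X \<xi> i)) in Im q = 0 \<and> Re q \<ge> 0))"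

definition madj :: "(nat \<Rightarrow> nat \<Rightarrow> 'a op) \<Rightarrow> nat \<Rightarrow> nat \<Rightarrow> 'a op" where
  "madj X = (\<lambda>i j. adj (X j i))"

definition bil_ampl :: "nat \<Rightarrow> ('a op \<Rightarrow> 'a op \<Rightarrow> 'b op)
    \<Rightarrow> (nat \<Rightarrow> nat \<Rightarrow> 'a op) \<Rightarrow> (nat \<Rightarrow> nat \<Rightarrow> 'a op) \<Rightarrow> nat \<Rightarrow> nat \<Rightarrow> 'b op" where
  "bil_ampl n \<phi> X Y = (\<lambda>i j \<xi> l. \<Sum>k<n. \<phi> (X i k) (Y k j) \<xi> l)"

definition lin_ampl :: "('a op \<Rightarrow> 'b op) \<Rightarrow> (nat \<Rightarrow> nat \<Rightarrow> 'a op) \<Rightarrow> nat \<Rightarrow> nat \<Rightarrow> 'b op" where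
  "lin_ampl \<psi> X = (\<lambda>i j. \<psi> (X i j))"

definition linear_map :: "'a op set \<Rightarrow> 'b op set \<Rightarrow> ('a op \<Rightarrow> 'b op) \<Rightarrow> bool" where
  "linear_map M N \<psi> \<longleftrightarrow> (\<forall>x\<in>M. \<psi> x \<in> N)
     \<and> (\<forall>x\<in>M. \<forall>y\<in>M. \<forall>a. \<psi> (op_add (op_scale a x) y) = op_add (op_scale a (\<psi> x)) (\<psi> y))"

definition cb_linear :: "'a op set \<Rightarrow> 'b op set \<Rightarrow> ('a op \<Rightarrow> 'b op) \<Rightarrow> bool" where
  "cb_linear M N \<psi> \<longleftrightarrow> linear_map M N \<psi>
     \<and> (\<exists>K. \<forall>n. \<forall>X\<in>mats n M. mnorm n (lin_ampl \<psi> X) \<le> K * mnorm n X)"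

definition bilinear_map :: "'a op set \<Rightarrow> 'b op set \<Rightarrow> ('a op \<Rightarrow> 'a op \<Rightarrow> 'b op) \<Rightarrow> bool" where
  "bilinear_map M N \<phi> \<longleftrightarrow> (\<forall>x\<in>M. \<forall>y\<in>M. \<phi> x y \<in> N)
     \<and> (\<forall>x\<in>M. \<forall>x'\<in>M. \<forall>y\<in>M. \<forall>a.
          \<phi> (op_add (op_scale a x) x') y = op_add (op_scale a (\<phi> x y)) (\<phi> x' y))
     \<and> (\<forall>x\<in>M. \<forall>y\<in>M. \<forall>y'\<in>M. \<forall>a.
          \<phi> x (op_add (op_scale a y) y') = op_add (op_scale a (\<phi> x y)) (\<phi> x y'))"

definition cb_bilinear :: "'a op set \<Rightarrow> 'b op set \<Rightarrow> ('a op \<Rightarrow> 'a op \<Rightarrow> 'b op) \<Rightarrow> bool" where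
  "cb_bilinear M N \<phi> \<longleftrightarrow> bilinear_map M N \<phi>
     \<and> (\<exists>K. \<forall>n. \<forall>X\<in>mats n M. \<forall>Y\<in>mats n M.
           mnorm n (bil_ampl n \<phi> X Y) \<le> K * mnorm n X * mnorm n Y)"

definition cont_bilinear :: "'a op set \<Rightarrow> 'b op set \<Rightarrow> ('a op \<Rightarrow> 'a op \<Rightarrow> 'b op) \<Rightarrow> bool" where
  "cont_bilinear M N \<phi> \<longleftrightarrow> bilinear_map M N \<phi>
     \<and> (\<exists>C. \<forall>x\<in>M. \<forall>y\<in>M. opnorm (\<phi> x y) \<le> C * opnorm x * opnorm y)"

definition cp_bilinear :: "'a op set \<Rightarrow> ('a op \<Rightarrow> 'a op \<Rightarrow> 'b op) \<Rightarrow> bool" where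
  "cp_bilinear M \<phi> \<longleftrightarrow> (\<forall>n. \<forall>X\<in>mats n M. mpos n (bil_ampl n \<phi> X (madj X)))"

text \<open>The series is required to
  converge in the weak operator topology, i.e. as a net of finite partial sums
  tested against vectors: this is unordered summation (has_sum).\<close>
definition type_B_factorization :: "'a op set \<Rightarrow> 'b op set \<Rightarrow> ('a op \<Rightarrow> 'a op \<Rightarrow> 'b op)
    \<Rightarrow> 'c set \<Rightarrow> ('c \<Rightarrow> 'a op \<Rightarrow> 'b op) \<Rightarrow> ('c \<Rightarrow> 'a op \<Rightarrow> 'b op) \<Rightarrow> real \<Rightarrow> bool" where
  "type_B_factorization M N \<phi> \<Lambda> \<psi> \<theta> K \<longleftrightarrow>
     (\<forall>j\<in>\<Lambda>. cb_linear M N (\<psi> j) \<and> cb_linear M N (\<theta> j))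
   \<and> (\<forall>x\<in>M. \<forall>F. finite F \<and> F \<subseteq> \<Lambda> \<longrightarrow>
        opnorm (\<lambda>\<xi> l. \<Sum>j\<in>F. (\<psi> j x \<circ> adj (\<psi> j x)) \<xi> l) \<le> K * (opnorm x)\<^sup>2)
   \<and> (\<forall>y\<in>M. \<forall>F. finite F \<and> F \<subseteq> \<Lambda> \<longrightarrow>
        opnorm (\<lambda>\<xi> l. \<Sum>j\<in>F. (adj (\<theta> j y) \<circ> \<theta> j y) \<xi> l) \<le> K * (opnorm y)\<^sup>2)
   \<and> (\<forall>x\<in>M. \<forall>y\<in>M. \<forall>\<xi>\<in>l2. \<forall>\<eta>\<in>l2.
        ((\<lambda>j. cinner \<eta> (\<psi> j x (\<theta> j y \<xi>))) has_sum cinner \<eta> (\<phi> x y \<xi>)) \<Lambda>)"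

end

theory Submission
  imports Defs
begin

text \<open>Write phi(x, y) = sum_j psi_j(x) theta_j(y) and, for c in {1, -1, i, -i}, put
  V_j^c(x) = (psi_j(x) + c theta_j(x* )* ) / 2.  Each bilinear map
  phi_c(x, y) = sum_j V_j^c(x) V_j^c(y* )* is completely positive, since on an n x n matrix X its
  amplification is sum_j V_j^c(X) V_j^c(X)^*, and it is bounded because the type B estimates
  control the row sums sum_j V_j^c(x) V_j^c(x)^* through Cauchy--Schwarz.  Expanding the
  products, the cross terms psi_j(x) theta_j(y) carry the coefficient conj(c) / 4, so the
  polarization phi_1 - phi_(-1) + i (phi_i - phi_(-i)) recovers phi.  The series defining phi_c
  converges in the weak operator topology; to see that it defines a bounded operator in N one
  needs the Riesz representation theorem on l2 and the bicommutant property of N.\<close>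

section \<open>The sequence space l2\<close>

definition restrict_vec :: "'a set \<Rightarrow> 'a vec \<Rightarrow> 'a vec" where
  "restrict_vec A \<xi> = (\<lambda>i. if i \<in> A then \<xi> i else 0)"

definition basis_vec :: "'a \<Rightarrow> 'a vec" where
  "basis_vec l = (\<lambda>i. if i = l then 1 else 0)"

lemma le_square_if_le_mult_sqrt:
  fixes s c :: real
  assumes "s \<ge> 0" "c \<ge> 0" "s \<le> c * sqrt s"
  shows "s \<le> c\<^sup>2"
proof (cases "s = 0")
  case False
  have "sqrt s * sqrt s \<le> c * sqrt s"
    using assms(1,3) by (metis real_sqrt_mult_self abs_of_nonneg)
  moreover have "sqrt s > 0" using False assms(1) by simp
  ultimately have "sqrt s \<le> c" by (rule mult_right_le_imp_le)
  then have "(sqrt s)\<^sup>2 \<le> c\<^sup>2" using assms(1) by (intro power_mono) simp_all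
  then show ?thesis using assms(1) by simp
qed (use assms in simp)

lemma cmod_lincomb_power2_le:
  "(cmod (a * u + b * v))\<^sup>2 \<le> 2 * (cmod a)\<^sup>2 * (cmod u)\<^sup>2 + 2 * (cmod b)\<^sup>2 * (cmod v)\<^sup>2"
proof -
  have "cmod (a * u + b * v) \<le> cmod a * cmod u + cmod b * cmod v"
    by (metis norm_mult norm_triangle_ineq)
  then have "(cmod (a * u + b * v))\<^sup>2 \<le> (cmod a * cmod u + cmod b * cmod v)\<^sup>2"
    by (simp add: power_mono)
  also have "\<dots> \<le> 2 * (cmod a * cmod u)\<^sup>2 + 2 * (cmod b * cmod v)\<^sup>2"
    using sum_squares_ge_zero[of "cmod a * cmod u - cmod b * cmod v" 0]
    by (simp add: power2_eq_square algebra_simps)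
  finally show ?thesis by (simp add: power_mult_distrib)
qed

lemma l2norm_power2: "(l2norm \<xi>)\<^sup>2 = (\<Sum>\<^sub>\<infinity>i. (cmod (\<xi> i))\<^sup>2)"
  by (simp add: l2norm_def infsum_nonneg)

lemma l2norm_nonneg: "l2norm \<xi> \<ge> 0"
  by (simp add: l2norm_def infsum_nonneg)

lemma l2_zero [simp]: "(\<lambda>i. 0) \<in> l2"
  by (simp add: l2_def)

lemma l2norm_zero [simp]: "l2norm (\<lambda>i. 0) = 0"
  by (simp add: l2norm_def)

lemma has_sum_l2norm_power2:
  "\<xi> \<in> l2 \<Longrightarrow> ((\<lambda>i. (cmod (\<xi> i))\<^sup>2) has_sum (l2norm \<xi>)\<^sup>2) UNIV"
  by (simp add: l2_def l2norm_power2)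

lemma l2norm_lincomb_power2_le:
  assumes "\<xi> \<in> l2" "\<eta> \<in> l2"
  shows "(\<lambda>i. a * \<xi> i + b * \<eta> i) \<in> l2"
    and "(l2norm (\<lambda>i. a * \<xi> i + b * \<eta> i))\<^sup>2
           \<le> 2 * (cmod a)\<^sup>2 * (l2norm \<xi>)\<^sup>2 + 2 * (cmod b)\<^sup>2 * (l2norm \<eta>)\<^sup>2"
proof -
  have bound: "((\<lambda>i. 2 * (cmod a)\<^sup>2 * (cmod (\<xi> i))\<^sup>2 + 2 * (cmod b)\<^sup>2 * (cmod (\<eta> i))\<^sup>2) has_sum
      (2 * (cmod a)\<^sup>2 * (l2norm \<xi>)\<^sup>2 + 2 * (cmod b)\<^sup>2 * (l2norm \<eta>)\<^sup>2)) UNIV"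
    by (intro has_sum_add has_sum_cmult_right has_sum_l2norm_power2 assms)
  then have "(\<lambda>i. 2 * (cmod a)\<^sup>2 * (cmod (\<xi> i))\<^sup>2 + 2 * (cmod b)\<^sup>2 * (cmod (\<eta> i))\<^sup>2) summable_on UNIV"
    by (auto simp: summable_on_def)
  then show l2: "(\<lambda>i. a * \<xi> i + b * \<eta> i) \<in> l2"
    unfolding l2_def by (auto intro: summable_on_comparison_test cmod_lincomb_power2_le)
  show "(l2norm (\<lambda>i. a * \<xi> i + b * \<eta> i))\<^sup>2
      \<le> 2 * (cmod a)\<^sup>2 * (l2norm \<xi>)\<^sup>2 + 2 * (cmod b)\<^sup>2 * (l2norm \<eta>)\<^sup>2"
    using has_sum_l2norm_power2[OF l2] bound by (rule has_sum_mono) (rule cmod_lincomb_power2_le)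
qed

lemmas l2_lincomb = l2norm_lincomb_power2_le(1)

lemma l2_add: "\<xi> \<in> l2 \<Longrightarrow> \<eta> \<in> l2 \<Longrightarrow> (\<lambda>i. \<xi> i + \<eta> i) \<in> l2"
  using l2_lincomb[of \<xi> \<eta> 1 1] by simp

lemma l2_scale: "\<xi> \<in> l2 \<Longrightarrow> (\<lambda>i. a * \<xi> i) \<in> l2"
  using l2_lincomb[of \<xi> "\<lambda>i. 0" a 0] by simp

lemma l2_sum: "finite F \<Longrightarrow> (\<And>j. j \<in> F \<Longrightarrow> v j \<in> l2) \<Longrightarrow> (\<lambda>l. \<Sum>j\<in>F. v j l) \<in> l2"
  by (induction F rule: finite_induct) (auto intro: l2_add)

lemma l2norm_scale: "\<xi> \<in> l2 \<Longrightarrow> l2norm (\<lambda>i. a * \<xi> i) = cmod a * l2norm \<xi>"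
  by (simp add: l2norm_def l2_def norm_mult power_mult_distrib infsum_cmult_right real_sqrt_mult)

lemma l2_restrict_vec_finite: "finite A \<Longrightarrow> restrict_vec A \<xi> \<in> l2"
  unfolding l2_def restrict_vec_def mem_Collect_eq
  by (rule finite_nonzero_values_imp_summable_on) (auto elim: finite_subset[rotated])

lemma l2_restrict_vec: "\<xi> \<in> l2 \<Longrightarrow> restrict_vec A \<xi> \<in> l2"
  unfolding l2_def restrict_vec_def mem_Collect_eq
  by (rule summable_on_comparison_test[where f="\<lambda>i. (cmod (\<xi> i))\<^sup>2"]) auto

lemma l2_basis_vec: "basis_vec l \<in> l2"
  using l2_restrict_vec_finite[of "{l}" "\<lambda>_. 1"]
  by (simp add: basis_vec_def restrict_vec_def)

lemma restrict_vec_insert: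
  "a \<notin> L \<Longrightarrow> restrict_vec (insert a L) \<xi> = (\<lambda>i. \<xi> a * basis_vec a i + restrict_vec L \<xi> i)"
  by (auto simp: restrict_vec_def basis_vec_def)

lemma restrict_vec_split: "(\<lambda>i. restrict_vec (- L) \<xi> i + restrict_vec L \<xi> i) = \<xi>"
  by (auto simp: restrict_vec_def)

lemma l2norm_restrict_vec_finite:
  assumes "finite L"
  shows "(l2norm (restrict_vec L \<xi>))\<^sup>2 = (\<Sum>i\<in>L. (cmod (\<xi> i))\<^sup>2)"
proof -
  have "(\<Sum>\<^sub>\<infinity>i. (cmod (restrict_vec L \<xi> i))\<^sup>2) = (\<Sum>\<^sub>\<infinity>i\<in>L. (cmod (\<xi> i))\<^sup>2)"
    unfolding restrict_vec_def by (rule infsum_cong_neutral) auto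
  then show ?thesis using assms by (simp add: l2norm_power2)
qed

lemma l2norm_basis_vec [simp]: "l2norm (basis_vec l) = 1"
proof -
  have "(l2norm (basis_vec l))\<^sup>2 = 1"
    using l2norm_restrict_vec_finite[of "{l}" "\<lambda>_. 1"]
    by (simp add: basis_vec_def restrict_vec_def)
  then show ?thesis using l2norm_nonneg[of "basis_vec l"] by (auto simp: power2_eq_1_iff)
qed

lemma sum_le_l2norm_power2:
  "\<xi> \<in> l2 \<Longrightarrow> finite F \<Longrightarrow> (\<Sum>i\<in>F. (cmod (\<xi> i))\<^sup>2) \<le> (l2norm \<xi>)\<^sup>2"
  unfolding l2norm_power2 by (rule finite_sum_le_infsum) (auto simp: l2_def)

lemma l2norm_eq_0_imp_zero:
  assumes "\<xi> \<in> l2" "l2norm \<xi> = 0"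
  shows "\<xi> = (\<lambda>i. 0)"
proof
  fix i
  show "\<xi> i = 0"
    using sum_le_l2norm_power2[OF assms(1), of "{i}"] assms(2) by simp
qed

lemma l2norm_restrict_vec_compl_small:
  assumes "\<xi> \<in> l2" "\<epsilon> > 0"
  obtains L where "finite L" "l2norm (restrict_vec (- L) \<xi>) < \<epsilon>"
proof -
  obtain L where L: "finite L" "dist (\<Sum>i\<in>L. (cmod (\<xi> i))\<^sup>2) ((l2norm \<xi>)\<^sup>2) \<le> \<epsilon>\<^sup>2 / 2"
    using has_sum_finite_approximation[OF has_sum_l2norm_power2[OF assms(1)], of "\<epsilon>\<^sup>2 / 2"] assms(2)
    by auto
  have "(\<lambda>i. (cmod (\<xi> i))\<^sup>2)
      = (\<lambda>i. (cmod (restrict_vec (- L) \<xi> i))\<^sup>2 + (cmod (restrict_vec L \<xi> i))\<^sup>2)"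
    by (auto simp: restrict_vec_def)
  then have "(l2norm \<xi>)\<^sup>2 = (l2norm (restrict_vec (- L) \<xi>))\<^sup>2 + (\<Sum>i\<in>L. (cmod (\<xi> i))\<^sup>2)"
    using l2_restrict_vec[OF assms(1)] l2_restrict_vec_finite[OF L(1)]
    by (simp add: l2norm_power2 infsum_add l2_def flip: l2norm_restrict_vec_finite[OF L(1)])
  then have "(l2norm (restrict_vec (- L) \<xi>))\<^sup>2 \<le> \<epsilon>\<^sup>2 / 2"
    using L(2) by (simp add: dist_real_def)
  moreover have "\<epsilon>\<^sup>2 > 0" using assms(2) by simp
  ultimately have "(l2norm (restrict_vec (- L) \<xi>))\<^sup>2 < \<epsilon>\<^sup>2" by linarith
  then show ?thesis
    using that[OF L(1)] assms(2) l2norm_nonneg power_less_imp_less_base by fastforce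
qed

lemma eq_0_if_bounded_by_tails:
  assumes "\<xi> \<in> l2" "C \<ge> 0"
    and "\<And>L. finite L \<Longrightarrow> cmod h \<le> C * l2norm (restrict_vec (- L) \<xi>)"
  shows "h = 0"
proof (rule ccontr)
  assume "h \<noteq> 0"
  then have "cmod h / (C + 1) > 0" using assms(2) by simp
  then obtain L where L: "finite L" "l2norm (restrict_vec (- L) \<xi>) < cmod h / (C + 1)"
    using l2norm_restrict_vec_compl_small[OF assms(1)] by blast
  have "cmod h \<le> C * l2norm (restrict_vec (- L) \<xi>)" by (rule assms(3)[OF L(1)])
  also have "\<dots> \<le> C * (cmod h / (C + 1))"
    using L(2) assms(2) by (intro mult_left_mono) auto
  also have "\<dots> < cmod h" using \<open>h \<noteq> 0\<close> assms(2) by (simp add: field_simps)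
  finally show False by simp
qed

lemma l2_if_bounded_partial_sums:
  assumes "\<And>L. finite L \<Longrightarrow> (\<Sum>i\<in>L. (cmod (w i))\<^sup>2) \<le> B\<^sup>2" "B \<ge> 0"
  shows "w \<in> l2" "l2norm w \<le> B"
proof -
  show w: "w \<in> l2"
    unfolding l2_def mem_Collect_eq
    by (rule nonneg_bdd_above_summable_on) (use assms in \<open>auto intro!: bdd_aboveI\<close>)
  have "(l2norm w)\<^sup>2 \<le> B\<^sup>2"
    unfolding l2norm_power2
    by (rule infsum_le_finite_sums) (use w assms in \<open>auto simp: l2_def\<close>)
  then show "l2norm w \<le> B" using assms(2) l2norm_nonneg by (simp add: power2_le_iff_abs_le)
qed

lemma cnj_mult_self: "cnj z * z = complex_of_real ((cmod z)\<^sup>2)"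
  by (metis complex_norm_square mult.commute)

lemma summable_cinner_abs:
  assumes "\<xi> \<in> l2" "\<eta> \<in> l2"
  shows "(\<lambda>i. norm (cnj (\<xi> i) * \<eta> i)) summable_on UNIV"
proof -
  have "(\<lambda>i. (cmod (\<xi> i))\<^sup>2 + (cmod (\<eta> i))\<^sup>2) summable_on UNIV"
    using assms by (intro summable_on_add) (auto simp: l2_def)
  moreover have "norm (cnj (\<xi> i) * \<eta> i) \<le> (cmod (\<xi> i))\<^sup>2 + (cmod (\<eta> i))\<^sup>2" for i
    unfolding norm_mult complex_mod_cnj
    using sum_squares_bound[of "cmod (\<xi> i)" "cmod (\<eta> i)"]
      mult_nonneg_nonneg[OF norm_ge_zero norm_ge_zero, of "\<xi> i" "\<eta> i"]
    by linarith
  ultimately show ?thesis by (auto intro: summable_on_comparison_test)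
qed

lemma has_sum_cinner:
  "\<xi> \<in> l2 \<Longrightarrow> \<eta> \<in> l2 \<Longrightarrow> ((\<lambda>i. cnj (\<xi> i) * \<eta> i) has_sum cinner \<xi> \<eta>) UNIV"
  unfolding cinner_def by (rule has_sum_infsum, rule abs_summable_summable, rule summable_cinner_abs)

lemma cinner_commute': "cinner \<eta> \<xi> = cnj (cinner \<xi> \<eta>)"
  unfolding cinner_def by (simp flip: infsum_cnj add: mult.commute)

lemma cinner_lincomb_right:
  assumes "\<xi> \<in> l2" "\<eta> \<in> l2" "\<zeta> \<in> l2"
  shows "cinner \<xi> (\<lambda>i. a * \<eta> i + b * \<zeta> i) = a * cinner \<xi> \<eta> + b * cinner \<xi> \<zeta>"
proof -
  have "((\<lambda>i. a * (cnj (\<xi> i) * \<eta> i) + b * (cnj (\<xi> i) * \<zeta> i))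
      has_sum (a * cinner \<xi> \<eta> + b * cinner \<xi> \<zeta>)) UNIV"
    by (intro has_sum_add has_sum_cmult_right has_sum_cinner assms)
  then show ?thesis unfolding cinner_def by (intro infsumI) (simp add: algebra_simps)
qed

lemma cinner_lincomb_left:
  "\<xi> \<in> l2 \<Longrightarrow> \<eta> \<in> l2 \<Longrightarrow> \<zeta> \<in> l2 \<Longrightarrow>
    cinner (\<lambda>i. a * \<eta> i + b * \<zeta> i) \<xi> = cnj a * cinner \<eta> \<xi> + cnj b * cinner \<zeta> \<xi>"
  by (subst (1 2 3) cinner_commute') (simp add: cinner_lincomb_right)

lemma cinner_add_left:
  "\<xi> \<in> l2 \<Longrightarrow> \<eta> \<in> l2 \<Longrightarrow> \<zeta> \<in> l2 \<Longrightarrow>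
    cinner (\<lambda>i. \<eta> i + \<zeta> i) \<xi> = cinner \<eta> \<xi> + cinner \<zeta> \<xi>"
  using cinner_lincomb_left[of \<xi> \<eta> \<zeta> 1 1] by simp

lemma cinner_zero_left [simp]: "cinner (\<lambda>i. 0) v = 0"
  by (simp add: cinner_def)

lemma cinner_self:
  assumes "\<xi> \<in> l2"
  shows "cinner \<xi> \<xi> = complex_of_real ((l2norm \<xi>)\<^sup>2)"
proof -
  have "((\<lambda>i. complex_of_real ((cmod (\<xi> i))\<^sup>2)) has_sum complex_of_real ((l2norm \<xi>)\<^sup>2)) UNIV"
    by (rule has_sum_of_real[OF has_sum_l2norm_power2[OF assms]])
  then show ?thesis
    unfolding cinner_def cnj_mult_self by (rule infsumI)
qed

lemma cinner_restrict_vec_finite: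
  assumes "finite L"
  shows "cinner (restrict_vec L \<eta>) v = (\<Sum>l\<in>L. cnj (\<eta> l) * v l)"
proof -
  have "cinner (restrict_vec L \<eta>) v = (\<Sum>\<^sub>\<infinity>l\<in>L. cnj (\<eta> l) * v l)"
    unfolding cinner_def restrict_vec_def by (rule infsum_cong_neutral) auto
  then show ?thesis using assms by simp
qed

lemma cinner_basis_vec [simp]: "cinner (basis_vec l) v = v l"
  using cinner_restrict_vec_finite[of "{l}" "\<lambda>_. 1" v]
  by (simp add: basis_vec_def restrict_vec_def)

lemma cinner_sum_right:
  assumes "\<xi> \<in> l2" "finite F" "\<And>j. j \<in> F \<Longrightarrow> v j \<in> l2"
  shows "cinner \<xi> (\<lambda>l. \<Sum>j\<in>F. v j l) = (\<Sum>j\<in>F. cinner \<xi> (v j))"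
  using assms(2,3)
proof (induction F rule: finite_induct)
  case (insert x F)
  then show ?case
    using cinner_lincomb_right[OF assms(1) _ l2_sum, of "v x" F v 1 1] by simp
qed (simp add: cinner_def)

lemma cinner_sum_left:
  "\<eta> \<in> l2 \<Longrightarrow> finite F \<Longrightarrow> (\<And>j. j \<in> F \<Longrightarrow> v j \<in> l2) \<Longrightarrow>
    cinner (\<lambda>l. \<Sum>j\<in>F. v j l) \<eta> = (\<Sum>j\<in>F. cinner (v j) \<eta>)"
  by (subst (1 2) cinner_commute') (simp add: cinner_sum_right)

lemma cinner_cauchy_schwarz:
  assumes "\<xi> \<in> l2" "\<eta> \<in> l2"
  shows "cmod (cinner \<xi> \<eta>) \<le> l2norm \<xi> * l2norm \<eta>"
proof -
  have "cmod (cinner \<xi> \<eta>) \<le> (\<Sum>\<^sub>\<infinity>i. norm (cnj (\<xi> i) * \<eta> i))"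
    unfolding cinner_def by (rule norm_infsum_bound[OF summable_cinner_abs[OF assms]])
  also have "\<dots> \<le> l2norm \<xi> * l2norm \<eta>"
  proof (rule infsum_le_finite_sums[OF summable_cinner_abs[OF assms]])
    fix F :: "'a set" assume F: "finite F"
    have "(\<Sum>i\<in>F. norm (cnj (\<xi> i) * \<eta> i)) = (\<Sum>i\<in>F. \<bar>cmod (\<xi> i)\<bar> * \<bar>cmod (\<eta> i)\<bar>)"
      by (simp add: norm_mult)
    also have "\<dots> \<le> L2_set (\<lambda>i. cmod (\<xi> i)) F * L2_set (\<lambda>i. cmod (\<eta> i)) F"
      by (rule L2_set_mult_ineq)
    also have "\<dots> \<le> l2norm \<xi> * l2norm \<eta>"
      unfolding L2_set_def
      using sum_le_l2norm_power2[OF assms(1) F] sum_le_l2norm_power2[OF assms(2) F]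
      by (intro mult_mono) (auto simp: real_le_lsqrt l2norm_nonneg sum_nonneg)
    finally show "(\<Sum>i\<in>F. norm (cnj (\<xi> i) * \<eta> i)) \<le> l2norm \<xi> * l2norm \<eta>" .
  qed
  finally show ?thesis .
qed

lemma conj_linear_restrict_vec_finite:
  fixes f :: "'a vec \<Rightarrow> complex"
  assumes conj_linear: "\<And>\<eta> \<zeta> a. \<eta> \<in> l2 \<Longrightarrow> \<zeta> \<in> l2 \<Longrightarrow>
             f (\<lambda>i. a * \<eta> i + \<zeta> i) = cnj a * f \<eta> + f \<zeta>"
    and "finite L"
  shows "f (restrict_vec L \<eta>) = cinner (restrict_vec L \<eta>) (\<lambda>l. f (basis_vec l))"
  using \<open>finite L\<close>
proof (induction L rule: finite_induct)
  case empty
  have "f (\<lambda>i. 0) = 0" using conj_linear[of "\<lambda>i. 0" "\<lambda>i. 0" 1] by simp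
  then show ?case by (simp add: restrict_vec_def)
next
  case (insert a L)
  then have "f (restrict_vec (insert a L) \<eta>) = cnj (\<eta> a) * f (basis_vec a) + f (restrict_vec L \<eta>)"
    by (simp add: restrict_vec_insert conj_linear l2_basis_vec l2_restrict_vec_finite)
  with insert show ?case by (simp add: cinner_restrict_vec_finite)
qed

text \<open>The representing vector lies in l2 because its finite truncations are controlled by the
  bound on f; the representation extends from finitely supported vectors to all of l2 because
  the tails of a vector are small.\<close>
lemma riesz_representation:
  fixes f :: "'a vec \<Rightarrow> complex"
  assumes conj_linear: "\<And>\<eta> \<zeta> a. \<eta> \<in> l2 \<Longrightarrow> \<zeta> \<in> l2 \<Longrightarrow>
             f (\<lambda>i. a * \<eta> i + \<zeta> i) = cnj a * f \<eta> + f \<zeta>"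
    and bounded: "\<And>\<eta>. \<eta> \<in> l2 \<Longrightarrow> cmod (f \<eta>) \<le> B * l2norm \<eta>"
  defines "w \<equiv> \<lambda>l. f (basis_vec l)"
  shows "w \<in> l2" and "l2norm w \<le> B" and "\<And>\<eta>. \<eta> \<in> l2 \<Longrightarrow> f \<eta> = cinner \<eta> w"
proof -
  have B: "B \<ge> 0"
    using order_trans[OF norm_ge_zero bounded[OF l2_basis_vec[of undefined]]] by simp
  have f_add: "f (\<lambda>i. \<eta> i + \<zeta> i) = f \<eta> + f \<zeta>" if "\<eta> \<in> l2" "\<zeta> \<in> l2" for \<eta> \<zeta>
    using conj_linear[OF that, of 1] by simp
  have f_finite: "f (restrict_vec L \<eta>) = cinner (restrict_vec L \<eta>) w" if "finite L" for L \<eta>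
    unfolding w_def using conj_linear that by (rule conj_linear_restrict_vec_finite)
  have "(\<Sum>l\<in>L. (cmod (w l))\<^sup>2) \<le> B\<^sup>2" if L: "finite L" for L
  proof (rule le_square_if_le_mult_sqrt[OF sum_nonneg B])
    have "f (restrict_vec L w) = complex_of_real (\<Sum>l\<in>L. (cmod (w l))\<^sup>2)"
      unfolding f_finite[OF L] cinner_restrict_vec_finite[OF L] by (simp only: of_real_sum cnj_mult_self)
    then have "(\<Sum>l\<in>L. (cmod (w l))\<^sup>2) = cmod (f (restrict_vec L w))"
      by (simp only: norm_of_real) (simp add: sum_nonneg)
    also have "\<dots> \<le> B * l2norm (restrict_vec L w)"
      by (rule bounded[OF l2_restrict_vec_finite[OF L]])
    also have "\<dots> = B * sqrt (\<Sum>l\<in>L. (cmod (w l))\<^sup>2)"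
      by (simp flip: l2norm_restrict_vec_finite[OF L] add: l2norm_nonneg)
    finally show "(\<Sum>l\<in>L. (cmod (w l))\<^sup>2) \<le> B * sqrt (\<Sum>l\<in>L. (cmod (w l))\<^sup>2)" .
  qed simp
  from l2_if_bounded_partial_sums[OF this B]
  show w: "w \<in> l2" and "l2norm w \<le> B" by blast+
  show "f \<eta> = cinner \<eta> w" if \<eta>: "\<eta> \<in> l2" for \<eta>
  proof -
    have "f \<eta> - cinner \<eta> w = 0"
    proof (rule eq_0_if_bounded_by_tails[OF \<eta>])
      show "0 \<le> B + l2norm w" using B l2norm_nonneg[of w] by simp
    next
      fix L :: "'a set" assume L: "finite L"
      define t where "t = restrict_vec (- L) \<eta>"
      have t: "t \<in> l2" unfolding t_def by (rule l2_restrict_vec[OF \<eta>])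
      have "f \<eta> - cinner \<eta> w = f t - cinner t w"
        using f_add[OF t l2_restrict_vec_finite[OF L, of \<eta>]] f_finite[OF L, of \<eta>]
          cinner_add_left[OF w t l2_restrict_vec_finite[OF L, of \<eta>]]
        by (simp add: t_def restrict_vec_split)
      also have "cmod \<dots> \<le> B * l2norm t + l2norm t * l2norm w"
        by (rule order_trans[OF norm_triangle_ineq4 add_mono[OF bounded[OF t] cinner_cauchy_schwarz[OF t w]]])
      finally show "cmod (f \<eta> - cinner \<eta> w) \<le> (B + l2norm w) * l2norm (restrict_vec (- L) \<eta>)"
        by (simp add: t_def algebra_simps)
    qed
    then show ?thesis by simp
  qed
qed

section \<open>Bounded operators and their adjoints\<close>

lemma bopI:
  fixes T :: "'a op"
  assumes "\<And>\<xi>. \<xi> \<in> l2 \<Longrightarrow> T \<xi> \<in> l2"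
    and "\<And>\<xi> \<eta> a. \<xi> \<in> l2 \<Longrightarrow> \<eta> \<in> l2 \<Longrightarrow> T (\<lambda>i. a * \<xi> i + \<eta> i) = (\<lambda>i. a * T \<xi> i + T \<eta> i)"
    and "\<And>\<xi>. \<xi> \<in> l2 \<Longrightarrow> l2norm (T \<xi>) \<le> C * l2norm \<xi>"
    and "\<And>\<xi>. \<xi> \<notin> l2 \<Longrightarrow> T \<xi> = (\<lambda>i. 0)"
  shows "T \<in> bop"
  unfolding bop_def using assms by blast

lemma bop_l2: "T \<in> bop \<Longrightarrow> \<xi> \<in> l2 \<Longrightarrow> T \<xi> \<in> l2"
  by (auto simp: bop_def)

lemma bop_apply_lin:
  "T \<in> bop \<Longrightarrow> \<xi> \<in> l2 \<Longrightarrow> \<eta> \<in> l2 \<Longrightarrow> T (\<lambda>i. a * \<xi> i + \<eta> i) = (\<lambda>i. a * T \<xi> i + T \<eta> i)"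
  by (auto simp: bop_def)

lemma bop_off: "T \<in> bop \<Longrightarrow> \<xi> \<notin> l2 \<Longrightarrow> T \<xi> = (\<lambda>i. 0)"
  by (auto simp: bop_def)

lemma bop_zero: "T \<in> bop \<Longrightarrow> T (\<lambda>i. 0) = (\<lambda>i. 0)"
  using bop_apply_lin[of T "\<lambda>i. 0" "\<lambda>i. 0" "-1"] by simp

lemma bop_apply_lincomb:
  assumes "T \<in> bop" "\<xi> \<in> l2" "\<eta> \<in> l2"
  shows "T (\<lambda>i. a * \<xi> i + b * \<eta> i) = (\<lambda>i. a * T \<xi> i + b * T \<eta> i)"
proof -
  have "T (\<lambda>i. b * \<eta> i) = (\<lambda>i. b * T \<eta> i)"
    using bop_apply_lin[OF assms(1,3) l2_zero, of b] bop_zero[OF assms(1)] by simp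
  then show ?thesis using bop_apply_lin[OF assms(1,2) l2_scale[OF assms(3)]] by simp
qed

lemma opnorm_bdd:
  assumes "T \<in> bop"
  shows "bdd_above {l2norm (T \<xi>) | \<xi>. \<xi> \<in> l2 \<and> l2norm \<xi> \<le> 1}"
proof -
  obtain C where C: "\<forall>\<xi>\<in>l2. l2norm (T \<xi>) \<le> C * l2norm \<xi>"
    using assms by (auto simp: bop_def)
  have "l2norm (T \<xi>) \<le> max C 0" if "\<xi> \<in> l2" "l2norm \<xi> \<le> 1" for \<xi>
  proof -
    have "l2norm (T \<xi>) \<le> C * l2norm \<xi>" using C that(1) by blast
    also have "\<dots> \<le> max C 0 * l2norm \<xi>" by (rule mult_right_mono) (auto simp: l2norm_nonneg)
    also have "\<dots> \<le> max C 0" using that(2) by (simp add: mult_left_le)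
    finally show ?thesis .
  qed
  then show ?thesis by (intro bdd_aboveI[of _ "max C 0"]) auto
qed

lemma l2norm_apply_le:
  assumes "T \<in> bop" "\<xi> \<in> l2"
  shows "l2norm (T \<xi>) \<le> opnorm T * l2norm \<xi>"
proof (cases "l2norm \<xi> = 0")
  case True
  then show ?thesis
    using l2norm_eq_0_imp_zero[OF assms(2)] bop_zero[OF assms(1)] by simp
next
  case False
  then have pos: "l2norm \<xi> > 0" using l2norm_nonneg[of \<xi>] by linarith
  define c where "c = complex_of_real (1 / l2norm \<xi>)"
  have c: "cmod c = 1 / l2norm \<xi>" using pos by (simp add: c_def norm_divide)
  have "l2norm (\<lambda>i. c * \<xi> i) = 1"
    using pos by (simp add: l2norm_scale[OF assms(2)] c)
  then have "l2norm (T (\<lambda>i. c * \<xi> i)) \<le> opnorm T"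
    unfolding opnorm_def using l2_scale[OF assms(2)]
    by (intro cSup_upper[OF _ opnorm_bdd[OF assms(1)]]) auto
  moreover have "T (\<lambda>i. c * \<xi> i) = (\<lambda>i. c * T \<xi> i)"
    using bop_apply_lincomb[OF assms(1,2) l2_zero, of c 0] bop_zero[OF assms(1)] by simp
  ultimately have "l2norm (T \<xi>) / l2norm \<xi> \<le> opnorm T"
    by (simp add: l2norm_scale[OF bop_l2[OF assms]] c)
  then show ?thesis using pos by (simp add: field_simps)
qed

lemma opnorm_nonneg:
  assumes "T \<in> bop"
  shows "opnorm T \<ge> 0"
  using l2norm_apply_le[OF assms l2_basis_vec[of undefined]] l2norm_nonneg[of "T (basis_vec undefined)"]
  by simp

lemma opnorm_le:
  fixes T :: "'a op"
  assumes "\<And>\<xi>. \<xi> \<in> l2 \<Longrightarrow> l2norm (T \<xi>) \<le> B * l2norm \<xi>"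
  shows "opnorm T \<le> B"
  unfolding opnorm_def
proof (rule cSup_least)
  show "{l2norm (T \<xi>) |\<xi>. \<xi> \<in> l2 \<and> l2norm \<xi> \<le> 1} \<noteq> {}"
    using l2_zero by fastforce
next
  have B: "B \<ge> 0"
    using order_trans[OF l2norm_nonneg assms[OF l2_basis_vec[of undefined]]] by simp
  fix x assume "x \<in> {l2norm (T \<xi>) |\<xi>. \<xi> \<in> l2 \<and> l2norm \<xi> \<le> 1}"
  then obtain \<xi> where "\<xi> \<in> l2" "l2norm \<xi> \<le> 1" "x = l2norm (T \<xi>)" by auto
  then show "x \<le> B" using assms[of \<xi>] B by (metis mult_left_le order_trans)
qed

lemma bop_comp:
  assumes S: "S \<in> bop" and T: "T \<in> bop"
  shows "S \<circ> T \<in> bop"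
proof (rule bopI)
  fix \<xi> :: "'a vec" assume \<xi>: "\<xi> \<in> l2"
  have "l2norm (S (T \<xi>)) \<le> opnorm S * (opnorm T * l2norm \<xi>)"
    using l2norm_apply_le[OF S bop_l2[OF T \<xi>]] l2norm_apply_le[OF T \<xi>] opnorm_nonneg[OF S]
    by (meson mult_left_mono order_trans)
  then show "l2norm ((S \<circ> T) \<xi>) \<le> (opnorm S * opnorm T) * l2norm \<xi>" by (simp add: mult.assoc)
next
  fix \<xi> :: "'a vec" assume "\<xi> \<notin> l2"
  then show "(S \<circ> T) \<xi> = (\<lambda>i. 0)" by (simp add: bop_off[OF T] bop_zero[OF S])
qed (use S T in \<open>simp_all add: bop_l2 bop_apply_lin\<close>)

lemma bop_lincomb:
  assumes S: "S \<in> bop" and T: "T \<in> bop"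
  shows "(\<lambda>\<xi> i. a * S \<xi> i + b * T \<xi> i) \<in> bop"
proof (rule bopI)
  fix \<xi> :: "'a vec" assume \<xi>: "\<xi> \<in> l2"
  define C where "C = 2 * (cmod a)\<^sup>2 * (opnorm S)\<^sup>2 + 2 * (cmod b)\<^sup>2 * (opnorm T)\<^sup>2"
  have "(l2norm (\<lambda>i. a * S \<xi> i + b * T \<xi> i))\<^sup>2
      \<le> 2 * (cmod a)\<^sup>2 * (l2norm (S \<xi>))\<^sup>2 + 2 * (cmod b)\<^sup>2 * (l2norm (T \<xi>))\<^sup>2"
    by (rule l2norm_lincomb_power2_le(2)[OF bop_l2[OF S \<xi>] bop_l2[OF T \<xi>]])
  also have "\<dots> \<le> 2 * (cmod a)\<^sup>2 * (opnorm S * l2norm \<xi>)\<^sup>2 + 2 * (cmod b)\<^sup>2 * (opnorm T * l2norm \<xi>)\<^sup>2"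
    by (intro add_mono mult_left_mono power_mono l2norm_apply_le S T \<xi> l2norm_nonneg) auto
  also have "\<dots> = C * (l2norm \<xi>)\<^sup>2"
    unfolding C_def power_mult_distrib by (simp only: distrib_right mult.assoc)
  finally have "l2norm (\<lambda>i. a * S \<xi> i + b * T \<xi> i) \<le> sqrt (C * (l2norm \<xi>)\<^sup>2)"
    by (rule real_le_rsqrt)
  then show "l2norm (\<lambda>i. a * S \<xi> i + b * T \<xi> i) \<le> sqrt C * l2norm \<xi>"
    by (simp add: real_sqrt_mult l2norm_nonneg)
next
  fix \<xi> \<eta> :: "'a vec" and c assume "\<xi> \<in> l2" "\<eta> \<in> l2"
  then show "(\<lambda>i. a * S (\<lambda>i. c * \<xi> i + \<eta> i) i + b * T (\<lambda>i. c * \<xi> i + \<eta> i) i)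
      = (\<lambda>i. c * (a * S \<xi> i + b * T \<xi> i) + (a * S \<eta> i + b * T \<eta> i))"
    by (simp only: bop_apply_lin[OF S \<open>\<xi> \<in> l2\<close> \<open>\<eta> \<in> l2\<close>]
        bop_apply_lin[OF T \<open>\<xi> \<in> l2\<close> \<open>\<eta> \<in> l2\<close>]) (simp add: algebra_simps)
next
  fix \<xi> :: "'a vec" assume "\<xi> \<notin> l2"
  then show "(\<lambda>i. a * S \<xi> i + b * T \<xi> i) = (\<lambda>i. 0)" by (simp add: bop_off[OF S] bop_off[OF T])
qed (use S T in \<open>simp add: bop_l2 l2_lincomb\<close>)

lemma bop_sum:
  "finite F \<Longrightarrow> (\<And>j. j \<in> F \<Longrightarrow> T j \<in> bop) \<Longrightarrow> (\<lambda>\<xi> l. \<Sum>j\<in>F. T j \<xi> l) \<in> bop"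
proof (induction F rule: finite_induct)
  case empty
  show ?case by (rule bopI[where C=0]) auto
next
  case (insert j F)
  then show ?case using bop_lincomb[of "T j" "\<lambda>\<xi> l. \<Sum>j\<in>F. T j \<xi> l" 1 1] by simp
qed

lemma adj_eqI:
  assumes "\<eta> \<in> l2" "\<zeta> \<in> l2" "\<And>\<xi>. \<xi> \<in> l2 \<Longrightarrow> cinner (T \<xi>) \<eta> = cinner \<xi> \<zeta>"
  shows "adj T \<eta> = \<zeta>"
proof -
  have "\<zeta>' = \<zeta>" if "\<forall>\<xi>\<in>l2. cinner (T \<xi>) \<eta> = cinner \<xi> \<zeta>'" for \<zeta>'
  proof
    fix l
    show "\<zeta>' l = \<zeta> l"
      using that assms(3)[OF l2_basis_vec[of l]] l2_basis_vec[of l] by simp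
  qed
  then have "(THE \<zeta>. \<zeta> \<in> l2 \<and> (\<forall>\<xi>\<in>l2. cinner (T \<xi>) \<eta> = cinner \<xi> \<zeta>)) = \<zeta>"
    using assms by (intro the_equality) auto
  then show ?thesis using assms(1) by (simp add: adj_def)
qed

text \<open>The functional xi \<mapsto> <T xi, eta> is Riesz represented, so the THE in adj is
  not a junk value.\<close>
lemma adj_l2_norm_cinner:
  assumes T: "T \<in> bop" and \<eta>: "\<eta> \<in> l2"
  shows "adj T \<eta> \<in> l2" and "l2norm (adj T \<eta>) \<le> opnorm T * l2norm \<eta>"
    and "\<And>\<xi>. \<xi> \<in> l2 \<Longrightarrow> cinner (T \<xi>) \<eta> = cinner \<xi> (adj T \<eta>)"
proof -
  define f where "f \<xi> = cinner (T \<xi>) \<eta>" for \<xi>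
  have lin: "f (\<lambda>i. a * \<xi> i + \<zeta> i) = cnj a * f \<xi> + f \<zeta>" if "\<xi> \<in> l2" "\<zeta> \<in> l2" for \<xi> \<zeta> a
    using cinner_lincomb_left[OF \<eta> bop_l2[OF T that(1)] bop_l2[OF T that(2)], of a 1]
    by (simp add: f_def bop_apply_lin[OF T that])
  have bounded: "cmod (f \<xi>) \<le> opnorm T * l2norm \<eta> * l2norm \<xi>" if "\<xi> \<in> l2" for \<xi>
  proof -
    have "cmod (f \<xi>) \<le> l2norm (T \<xi>) * l2norm \<eta>"
      unfolding f_def by (rule cinner_cauchy_schwarz[OF bop_l2[OF T that] \<eta>])
    also have "\<dots> \<le> opnorm T * l2norm \<xi> * l2norm \<eta>"
      by (rule mult_right_mono[OF l2norm_apply_le[OF T that] l2norm_nonneg])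
    finally show ?thesis by (simp add: algebra_simps)
  qed
  note R = riesz_representation[of f "opnorm T * l2norm \<eta>", OF lin bounded, unfolded f_def]
  have adj: "adj T \<eta> = (\<lambda>l. cinner (T (basis_vec l)) \<eta>)"
    by (rule adj_eqI[OF \<eta> R(1) R(3)])
  show "adj T \<eta> \<in> l2" "l2norm (adj T \<eta>) \<le> opnorm T * l2norm \<eta>"
    "\<And>\<xi>. \<xi> \<in> l2 \<Longrightarrow> cinner (T \<xi>) \<eta> = cinner \<xi> (adj T \<eta>)"
    unfolding adj using R by blast+
qed

lemmas adj_l2 = adj_l2_norm_cinner(1)
  and l2norm_adj_le = adj_l2_norm_cinner(2)
  and cinner_adj = adj_l2_norm_cinner(3)

lemma cinner_adj_right:
  assumes "T \<in> bop" "\<eta> \<in> l2" "\<xi> \<in> l2"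
  shows "cinner \<eta> (T \<xi>) = cinner (adj T \<eta>) \<xi>"
proof -
  have "cinner \<eta> (T \<xi>) = cnj (cinner (T \<xi>) \<eta>)" by (rule cinner_commute')
  also have "\<dots> = cinner (adj T \<eta>) \<xi>" by (simp only: cinner_adj[OF assms] cinner_commute'[of "adj T \<eta>"])
  finally show ?thesis .
qed

lemma adj_bop:
  assumes T: "T \<in> bop"
  shows "adj T \<in> bop"
proof (rule bopI[where C="opnorm T"])
  fix \<xi> \<eta> :: "'a vec" and a assume \<xi>: "\<xi> \<in> l2" and \<eta>: "\<eta> \<in> l2"
  show "adj T (\<lambda>i. a * \<xi> i + \<eta> i) = (\<lambda>i. a * adj T \<xi> i + adj T \<eta> i)"
  proof (rule adj_eqI)
    fix \<zeta> :: "'a vec" assume \<zeta>: "\<zeta> \<in> l2"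
    show "cinner (T \<zeta>) (\<lambda>i. a * \<xi> i + \<eta> i) = cinner \<zeta> (\<lambda>i. a * adj T \<xi> i + adj T \<eta> i)"
      using cinner_lincomb_right[OF bop_l2[OF T \<zeta>] \<xi> \<eta>, of a 1]
        cinner_lincomb_right[OF \<zeta> adj_l2[OF T \<xi>] adj_l2[OF T \<eta>], of a 1]
      by (simp add: cinner_adj[OF T \<xi> \<zeta>] cinner_adj[OF T \<eta> \<zeta>])
  qed (use \<xi> \<eta> T in \<open>auto intro: l2_lincomb[of _ _ _ 1, simplified] adj_l2\<close>)
next
  fix \<xi> :: "'a vec" assume "\<xi> \<notin> l2"
  then show "adj T \<xi> = (\<lambda>i. 0)" by (simp add: adj_def)
qed (use T in \<open>simp_all add: adj_l2 l2norm_adj_le\<close>)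

lemma adj_adj:
  assumes T: "T \<in> bop"
  shows "adj (adj T) = T"
proof
  fix \<eta> :: "'a vec"
  show "adj (adj T) \<eta> = T \<eta>"
  proof (cases "\<eta> \<in> l2")
    case True
    then show ?thesis
      by (intro adj_eqI bop_l2[OF T]) (auto simp: cinner_adj_right[OF T])
  qed (simp add: adj_def bop_off[OF T])
qed

lemma opnorm_adj_le: "T \<in> bop \<Longrightarrow> opnorm (adj T) \<le> opnorm T"
  by (rule opnorm_le) (rule l2norm_adj_le)

lemma adj_lincomb:
  assumes S: "S \<in> bop" and T: "T \<in> bop"
  shows "adj (\<lambda>\<xi> i. a * S \<xi> i + b * T \<xi> i) = (\<lambda>\<xi> i. cnj a * adj S \<xi> i + cnj b * adj T \<xi> i)"
proof
  fix \<eta> :: "'a vec"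
  show "adj (\<lambda>\<xi> i. a * S \<xi> i + b * T \<xi> i) \<eta> = (\<lambda>i. cnj a * adj S \<eta> i + cnj b * adj T \<eta> i)"
  proof (cases "\<eta> \<in> l2")
    case True
    show ?thesis
    proof (rule adj_eqI[OF True l2_lincomb[OF adj_l2[OF S True] adj_l2[OF T True]]])
      fix \<xi> :: "'a vec" assume \<xi>: "\<xi> \<in> l2"
      show "cinner (\<lambda>i. a * S \<xi> i + b * T \<xi> i) \<eta> = cinner \<xi> (\<lambda>i. cnj a * adj S \<eta> i + cnj b * adj T \<eta> i)"
        by (simp add: cinner_lincomb_left[OF True bop_l2[OF S \<xi>] bop_l2[OF T \<xi>]]
            cinner_lincomb_right[OF \<xi> adj_l2[OF S True] adj_l2[OF T True]]
            cinner_adj[OF S True \<xi>] cinner_adj[OF T True \<xi>])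
    qed
  qed (simp add: adj_def)
qed

section \<open>Von Neumann algebras and weak operator sums\<close>

lemma commutant_bop: "commutant S \<subseteq> bop"
  by (auto simp: commutant_def)

lemma commutant_lincomb:
  assumes S: "S \<subseteq> bop" and A: "A \<in> commutant S" and B: "B \<in> commutant S"
  shows "(\<lambda>\<xi> i. a * A \<xi> i + b * B \<xi> i) \<in> commutant S"
proof -
  have Ab: "A \<in> bop" and Bb: "B \<in> bop" using A B commutant_bop by blast+
  have "C \<circ> (\<lambda>\<xi> i. a * A \<xi> i + b * B \<xi> i) = (\<lambda>\<xi> i. a * A \<xi> i + b * B \<xi> i) \<circ> C"
    if C: "C \<in> S" for C
  proof
    fix \<xi> :: "'a vec"
    have Cb: "C \<in> bop" using C S by auto
    have "C (A \<zeta>) = A (C \<zeta>)" "C (B \<zeta>) = B (C \<zeta>)" for \<zeta>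
      using A B C by (auto simp: commutant_def fun_eq_iff)
    then show "(C \<circ> (\<lambda>\<xi> i. a * A \<xi> i + b * B \<xi> i)) \<xi> = ((\<lambda>\<xi> i. a * A \<xi> i + b * B \<xi> i) \<circ> C) \<xi>"
      by (cases "\<xi> \<in> l2")
        (simp_all add: bop_apply_lincomb[OF Cb bop_l2[OF Ab] bop_l2[OF Bb]]
          bop_off[OF Ab] bop_off[OF Bb] bop_off[OF Cb] bop_zero[OF Ab] bop_zero[OF Bb] bop_zero[OF Cb])
  qed
  then show ?thesis unfolding commutant_def using bop_lincomb[OF Ab Bb] by auto
qed

lemma commutant_comp:
  assumes A: "A \<in> commutant S" and B: "B \<in> commutant S"
  shows "A \<circ> B \<in> commutant S"
proof -
  have "C \<circ> (A \<circ> B) = (A \<circ> B) \<circ> C" if "C \<in> S" for C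
  proof -
    have "C \<circ> A = A \<circ> C" "C \<circ> B = B \<circ> C" using A B that by (auto simp: commutant_def)
    then show ?thesis by (metis comp_assoc)
  qed
  then show ?thesis
    using A B commutant_bop bop_comp unfolding commutant_def by blast
qed

lemma vn_bop: "von_neumann_algebra N \<Longrightarrow> T \<in> N \<Longrightarrow> T \<in> bop"
  by (auto simp: von_neumann_algebra_def)

lemma vn_adj: "von_neumann_algebra N \<Longrightarrow> T \<in> N \<Longrightarrow> adj T \<in> N"
  by (auto simp: von_neumann_algebra_def)

lemma vn_lincomb:
  assumes "von_neumann_algebra N" "A \<in> N" "B \<in> N"
  shows "(\<lambda>\<xi> i. a * A \<xi> i + b * B \<xi> i) \<in> N"
proof -
  have "A \<in> commutant (commutant N)" "B \<in> commutant (commutant N)"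
    using assms by (simp_all add: von_neumann_algebra_def)
  then have "(\<lambda>\<xi> i. a * A \<xi> i + b * B \<xi> i) \<in> commutant (commutant N)"
    by (rule commutant_lincomb[OF commutant_bop])
  then show ?thesis using assms(1) by (simp add: von_neumann_algebra_def)
qed

lemma vn_comp:
  assumes "von_neumann_algebra N" "A \<in> N" "B \<in> N"
  shows "A \<circ> B \<in> N"
  using commutant_comp[of A "commutant N" B] assms by (simp add: von_neumann_algebra_def)

lemma vn_memI:
  assumes "von_neumann_algebra N" "T \<in> bop"
    and "\<And>A \<xi>. A \<in> commutant N \<Longrightarrow> A (T \<xi>) = T (A \<xi>)"
  shows "T \<in> N"
proof -
  have "T \<in> commutant (commutant N)"
    using assms(2,3) by (auto simp: commutant_def[of "commutant N"] fun_eq_iff)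
  then show ?thesis using assms(1) by (simp add: von_neumann_algebra_def)
qed

lemma vn_commute: "T \<in> N \<Longrightarrow> A \<in> commutant N \<Longrightarrow> A (T \<xi>) = T (A \<xi>)"
  by (auto simp: commutant_def fun_eq_iff)

text \<open>The series is summed coordinatewise; under the absolute bound of weakly_abs_summable it
  then also converges against every vector.\<close>
definition weak_opsum :: "'c set \<Rightarrow> ('c \<Rightarrow> 'a op) \<Rightarrow> 'a op" where
  "weak_opsum \<Lambda> T = (\<lambda>\<xi>. if \<xi> \<in> l2 then (\<lambda>l. \<Sum>\<^sub>\<infinity>j\<in>\<Lambda>. T j \<xi> l) else (\<lambda>l. 0))"

definition weakly_abs_summable :: "'c set \<Rightarrow> ('c \<Rightarrow> 'a op) \<Rightarrow> real \<Rightarrow> bool" where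
  "weakly_abs_summable \<Lambda> T C \<longleftrightarrow> (\<forall>j\<in>\<Lambda>. T j \<in> bop)
     \<and> (\<forall>\<xi>\<in>l2. \<forall>\<eta>\<in>l2. \<forall>F. finite F \<and> F \<subseteq> \<Lambda> \<longrightarrow>
          (\<Sum>j\<in>F. cmod (cinner \<eta> (T j \<xi>))) \<le> C * l2norm \<xi> * l2norm \<eta>)"

lemma weakly_abs_summable_cinner:
  assumes T: "weakly_abs_summable \<Lambda> T C" and \<xi>: "\<xi> \<in> l2" and \<eta>: "\<eta> \<in> l2"
  shows "(\<lambda>j. cinner \<eta> (T j \<xi>)) summable_on \<Lambda>"
    and "cmod (\<Sum>\<^sub>\<infinity>j\<in>\<Lambda>. cinner \<eta> (T j \<xi>)) \<le> C * l2norm \<xi> * l2norm \<eta>"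
proof -
  have bound: "(\<Sum>j\<in>F. cmod (cinner \<eta> (T j \<xi>))) \<le> C * l2norm \<xi> * l2norm \<eta>"
    if "finite F" "F \<subseteq> \<Lambda>" for F
    using T \<xi> \<eta> that by (auto simp: weakly_abs_summable_def)
  have abs: "(\<lambda>j. norm (cinner \<eta> (T j \<xi>))) summable_on \<Lambda>"
    by (rule nonneg_bdd_above_summable_on) (use bound in \<open>auto intro!: bdd_aboveI\<close>)
  then show "(\<lambda>j. cinner \<eta> (T j \<xi>)) summable_on \<Lambda>" by (rule abs_summable_summable)
  have "cmod (\<Sum>\<^sub>\<infinity>j\<in>\<Lambda>. cinner \<eta> (T j \<xi>)) \<le> (\<Sum>\<^sub>\<infinity>j\<in>\<Lambda>. norm (cinner \<eta> (T j \<xi>)))"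
    by (rule norm_infsum_bound[OF abs])
  also have "\<dots> \<le> C * l2norm \<xi> * l2norm \<eta>"
    by (rule infsum_le_finite_sums[OF abs]) (use bound in auto)
  finally show "cmod (\<Sum>\<^sub>\<infinity>j\<in>\<Lambda>. cinner \<eta> (T j \<xi>)) \<le> C * l2norm \<xi> * l2norm \<eta>" .
qed

lemma weak_opsum_apply:
  assumes T: "weakly_abs_summable \<Lambda> T C" and \<xi>: "\<xi> \<in> l2"
  shows "weak_opsum \<Lambda> T \<xi> \<in> l2" and "l2norm (weak_opsum \<Lambda> T \<xi>) \<le> C * l2norm \<xi>"
    and "\<And>\<eta>. \<eta> \<in> l2 \<Longrightarrow> ((\<lambda>j. cinner \<eta> (T j \<xi>)) has_sum cinner \<eta> (weak_opsum \<Lambda> T \<xi>)) \<Lambda>"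
proof -
  define f where "f \<eta> = (\<Sum>\<^sub>\<infinity>j\<in>\<Lambda>. cinner \<eta> (T j \<xi>))" for \<eta>
  have f: "((\<lambda>j. cinner \<eta> (T j \<xi>)) has_sum f \<eta>) \<Lambda>" if "\<eta> \<in> l2" for \<eta>
    unfolding f_def by (rule has_sum_infsum[OF weakly_abs_summable_cinner(1)[OF T \<xi> that]])
  have lin: "f (\<lambda>i. a * \<eta> i + \<zeta> i) = cnj a * f \<eta> + f \<zeta>" if "\<eta> \<in> l2" "\<zeta> \<in> l2" for \<eta> \<zeta> a
  proof (rule has_sum_unique[OF f])
    have eq: "cinner (\<lambda>i. a * \<eta> i + \<zeta> i) (T j \<xi>) = cnj a * cinner \<eta> (T j \<xi>) + cinner \<zeta> (T j \<xi>)"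
      if "j \<in> \<Lambda>" for j
      using T \<xi> \<open>\<eta> \<in> l2\<close> \<open>\<zeta> \<in> l2\<close> that cinner_lincomb_left[of "T j \<xi>" \<eta> \<zeta> a 1]
      by (simp add: weakly_abs_summable_def bop_l2)
    show "((\<lambda>j. cinner (\<lambda>i. a * \<eta> i + \<zeta> i) (T j \<xi>)) has_sum (cnj a * f \<eta> + f \<zeta>)) \<Lambda>"
      using has_sum_add[OF has_sum_cmult_right[OF f[OF \<open>\<eta> \<in> l2\<close>], of "cnj a"] f[OF \<open>\<zeta> \<in> l2\<close>]]
      by (rule has_sum_cong[THEN iffD1, rotated]) (simp add: eq)
  qed (use that in \<open>simp add: l2_lincomb[of _ _ _ 1, simplified]\<close>)
  have bounded: "cmod (f \<eta>) \<le> C * l2norm \<xi> * l2norm \<eta>" if "\<eta> \<in> l2" for \<eta>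
    unfolding f_def by (rule weakly_abs_summable_cinner(2)[OF T \<xi> that])
  have R: "(\<lambda>l. f (basis_vec l)) \<in> l2" "l2norm (\<lambda>l. f (basis_vec l)) \<le> C * l2norm \<xi>"
    "\<And>\<eta>. \<eta> \<in> l2 \<Longrightarrow> f \<eta> = cinner \<eta> (\<lambda>l. f (basis_vec l))"
    using riesz_representation[of f "C * l2norm \<xi>"] lin bounded by blast+
  have w: "(\<lambda>l. f (basis_vec l)) = weak_opsum \<Lambda> T \<xi>"
    using \<xi> by (simp add: f_def weak_opsum_def)
  show "weak_opsum \<Lambda> T \<xi> \<in> l2" "l2norm (weak_opsum \<Lambda> T \<xi>) \<le> C * l2norm \<xi>"
    using R(1,2) unfolding w by blast+
  show "((\<lambda>j. cinner \<eta> (T j \<xi>)) has_sum cinner \<eta> (weak_opsum \<Lambda> T \<xi>)) \<Lambda>" if "\<eta> \<in> l2" for \<eta>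
    using f[OF that] unfolding R(3)[OF that, unfolded w] .
qed

lemma has_sum_weak_opsum:
  "weakly_abs_summable \<Lambda> T C \<Longrightarrow> \<xi> \<in> l2 \<Longrightarrow> ((\<lambda>j. T j \<xi> l) has_sum weak_opsum \<Lambda> T \<xi> l) \<Lambda>"
  using weak_opsum_apply(3)[OF _ _ l2_basis_vec[of l]] by simp

lemma weak_opsum_eqI:
  assumes "\<And>\<xi> l. \<xi> \<in> l2 \<Longrightarrow> ((\<lambda>j. T j \<xi> l) has_sum S \<xi> l) \<Lambda>"
    and "\<And>\<xi>. \<xi> \<notin> l2 \<Longrightarrow> S \<xi> = (\<lambda>l. 0)"
  shows "weak_opsum \<Lambda> T = S"
  using assms by (auto simp: weak_opsum_def fun_eq_iff infsumI)

lemma weak_opsum_cong: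
  "(\<And>j \<xi>. j \<in> \<Lambda> \<Longrightarrow> \<xi> \<in> l2 \<Longrightarrow> S j \<xi> = T j \<xi>) \<Longrightarrow> weak_opsum \<Lambda> S = weak_opsum \<Lambda> T"
  unfolding weak_opsum_def by (auto simp: fun_eq_iff intro!: infsum_cong)

lemma weak_opsum_lincomb:
  assumes "weakly_abs_summable \<Lambda> S C" "weakly_abs_summable \<Lambda> T D"
  shows "weak_opsum \<Lambda> (\<lambda>j \<xi> l. a * S j \<xi> l + T j \<xi> l)
    = (\<lambda>\<xi> l. a * weak_opsum \<Lambda> S \<xi> l + weak_opsum \<Lambda> T \<xi> l)"
  using assms by (intro weak_opsum_eqI has_sum_add has_sum_cmult_right has_sum_weak_opsum)
    (auto simp: weak_opsum_def)

lemma weak_opsum_bop: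
  fixes T :: "'c \<Rightarrow> 'a op"
  assumes T: "weakly_abs_summable \<Lambda> T C"
  shows "weak_opsum \<Lambda> T \<in> bop" and "opnorm (weak_opsum \<Lambda> T) \<le> C"
proof -
  show bop: "weak_opsum \<Lambda> T \<in> bop"
  proof (rule bopI[where C=C])
    fix \<xi> \<eta> :: "'a vec" and a assume \<xi>: "\<xi> \<in> l2" and \<eta>: "\<eta> \<in> l2"
    have eq: "T j (\<lambda>i. a * \<xi> i + \<eta> i) l = a * T j \<xi> l + T j \<eta> l" if "j \<in> \<Lambda>" for j l
      using T that bop_apply_lin[OF _ \<xi> \<eta>] by (simp add: weakly_abs_summable_def)
    have "((\<lambda>j. T j (\<lambda>i. a * \<xi> i + \<eta> i) l) has_sum
        (a * weak_opsum \<Lambda> T \<xi> l + weak_opsum \<Lambda> T \<eta> l)) \<Lambda>" for l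
      using has_sum_add[OF has_sum_cmult_right[OF has_sum_weak_opsum[OF T \<xi>]]
          has_sum_weak_opsum[OF T \<eta>], of a l l]
      by (rule has_sum_cong[THEN iffD1, rotated]) (simp add: eq)
    then show "weak_opsum \<Lambda> T (\<lambda>i. a * \<xi> i + \<eta> i)
        = (\<lambda>l. a * weak_opsum \<Lambda> T \<xi> l + weak_opsum \<Lambda> T \<eta> l)"
      using has_sum_weak_opsum[OF T l2_lincomb[OF \<xi> \<eta>, of a 1, simplified]]
      by (auto intro: has_sum_unique)
  qed (use weak_opsum_apply[OF T] in \<open>auto simp: weak_opsum_def\<close>)
  show "opnorm (weak_opsum \<Lambda> T) \<le> C"
    by (rule opnorm_le) (rule weak_opsum_apply(2)[OF T])
qed

text \<open>The commutant of N commutes with each term, hence with the weak limit.\<close>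
lemma weak_opsum_in_vn:
  assumes N: "von_neumann_algebra N" and T: "weakly_abs_summable \<Lambda> T C"
    and TN: "\<And>j. j \<in> \<Lambda> \<Longrightarrow> T j \<in> N"
  shows "weak_opsum \<Lambda> T \<in> N"
proof (rule vn_memI[OF N weak_opsum_bop(1)[OF T]])
  fix A \<xi> assume A: "A \<in> commutant N"
  have Ab: "A \<in> bop" using A commutant_bop by blast
  show "A (weak_opsum \<Lambda> T \<xi>) = weak_opsum \<Lambda> T (A \<xi>)"
  proof (cases "\<xi> \<in> l2")
    case True
    show ?thesis
    proof
      fix l
      have TA: "T j (A \<xi>) l = cinner (adj A (basis_vec l)) (T j \<xi>)" if "j \<in> \<Lambda>" for j
        using cinner_adj_right[OF Ab l2_basis_vec vn_bop[OF N TN[OF that], THEN bop_l2, OF True]]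
          vn_commute[OF TN[OF that] A] by simp
      have "((\<lambda>j. T j (A \<xi>) l) has_sum cinner (adj A (basis_vec l)) (weak_opsum \<Lambda> T \<xi>)) \<Lambda>"
        using weak_opsum_apply(3)[OF T True adj_l2[OF Ab l2_basis_vec]]
        by (rule has_sum_cong[THEN iffD1, rotated]) (simp add: TA)
      moreover have "cinner (adj A (basis_vec l)) (weak_opsum \<Lambda> T \<xi>) = A (weak_opsum \<Lambda> T \<xi>) l"
        using cinner_adj_right[OF Ab l2_basis_vec weak_opsum_apply(1)[OF T True]] by simp
      ultimately show "A (weak_opsum \<Lambda> T \<xi>) l = weak_opsum \<Lambda> T (A \<xi>) l"
        using has_sum_weak_opsum[OF T bop_l2[OF Ab True]] by (metis has_sum_unique)
    qed
  next
    case False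
    have "T j (\<lambda>i. 0) = (\<lambda>i. 0)" if "j \<in> \<Lambda>" for j
      by (rule bop_zero[OF vn_bop[OF N TN[OF that]]])
    with False show ?thesis
      by (auto simp: weak_opsum_def bop_off[OF Ab] bop_zero[OF Ab] fun_eq_iff intro!: infsum_0)
  qed
qed

lemma sum_cmod_cinner_comp_le:
  assumes F: "finite F" and AB: "\<And>j. j \<in> F \<Longrightarrow> A j \<in> bop \<and> B j \<in> bop"
    and \<xi>: "\<xi> \<in> l2" and \<eta>: "\<eta> \<in> l2"
  shows "(\<Sum>j\<in>F. cmod (cinner \<eta> (A j (B j \<xi>))))
    \<le> sqrt (\<Sum>j\<in>F. (l2norm (adj (A j) \<eta>))\<^sup>2) * sqrt (\<Sum>j\<in>F. (l2norm (B j \<xi>))\<^sup>2)"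
proof -
  have "(\<Sum>j\<in>F. cmod (cinner \<eta> (A j (B j \<xi>))))
      \<le> (\<Sum>j\<in>F. \<bar>l2norm (adj (A j) \<eta>)\<bar> * \<bar>l2norm (B j \<xi>)\<bar>)"
  proof (rule sum_mono)
    fix j assume "j \<in> F"
    then have A: "A j \<in> bop" and B: "B j \<in> bop" using AB by blast+
    show "cmod (cinner \<eta> (A j (B j \<xi>))) \<le> \<bar>l2norm (adj (A j) \<eta>)\<bar> * \<bar>l2norm (B j \<xi>)\<bar>"
      unfolding cinner_adj_right[OF A \<eta> bop_l2[OF B \<xi>]]
      using cinner_cauchy_schwarz[OF adj_l2[OF A \<eta>] bop_l2[OF B \<xi>]] by (simp add: l2norm_nonneg)
  qed
  also have "\<dots> \<le> L2_set (\<lambda>j. l2norm (adj (A j) \<eta>)) F * L2_set (\<lambda>j. l2norm (B j \<xi>)) F"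
    by (rule L2_set_mult_ineq)
  finally show ?thesis by (simp add: L2_set_def)
qed

text \<open>The row estimate: sum_j ||T_j xi||^2 = <xi, (sum_j T_j* T_j) xi>.\<close>
lemma sum_l2norm_power2_le_opnorm:
  assumes F: "finite F" and T: "\<And>j. j \<in> F \<Longrightarrow> T j \<in> bop" and \<xi>: "\<xi> \<in> l2"
  shows "(\<Sum>j\<in>F. (l2norm (T j \<xi>))\<^sup>2)
    \<le> opnorm (\<lambda>\<xi> l. \<Sum>j\<in>F. (adj (T j) \<circ> T j) \<xi> l) * (l2norm \<xi>)\<^sup>2"
proof -
  define Q where "Q = (\<lambda>\<xi> l. \<Sum>j\<in>F. (adj (T j) \<circ> T j) \<xi> l)"
  have Q: "Q \<in> bop" unfolding Q_def using T by (intro bop_sum F bop_comp adj_bop) auto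
  have "cinner \<xi> (Q \<xi>) = (\<Sum>j\<in>F. cinner \<xi> (adj (T j) (T j \<xi>)))"
    unfolding Q_def comp_def using T \<xi> by (subst cinner_sum_right[OF \<xi> F]) (auto intro: bop_l2 adj_l2)
  also have "\<dots> = (\<Sum>j\<in>F. complex_of_real ((l2norm (T j \<xi>))\<^sup>2))"
  proof (rule sum.cong[OF refl])
    fix j assume "j \<in> F"
    then have Tj: "T j \<in> bop" by (rule T)
    show "cinner \<xi> (adj (T j) (T j \<xi>)) = complex_of_real ((l2norm (T j \<xi>))\<^sup>2)"
      using cinner_adj[OF Tj bop_l2[OF Tj \<xi>] \<xi>] cinner_self[OF bop_l2[OF Tj \<xi>]] by simp
  qed
  finally have "(\<Sum>j\<in>F. (l2norm (T j \<xi>))\<^sup>2) = cmod (cinner \<xi> (Q \<xi>))"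
    by (simp only: of_real_sum[symmetric] norm_of_real) (simp add: sum_nonneg)
  also have "\<dots> \<le> l2norm \<xi> * l2norm (Q \<xi>)" by (rule cinner_cauchy_schwarz[OF \<xi> bop_l2[OF Q \<xi>]])
  also have "\<dots> \<le> l2norm \<xi> * (opnorm Q * l2norm \<xi>)"
    by (rule mult_left_mono[OF l2norm_apply_le[OF Q \<xi>] l2norm_nonneg])
  finally show ?thesis by (simp add: Q_def power2_eq_square algebra_simps)
qed

section \<open>Completely positive Gram maps\<close>

lemma has_sum_diff:
  fixes f g :: "'c \<Rightarrow> 'b :: topological_ab_group_add"
  assumes "(f has_sum a) A" "(g has_sum b) A"
  shows "((\<lambda>x. f x - g x) has_sum (a - b)) A"
  using has_sum_add[OF assms(1) has_sum_uminus[of g A "- b", THEN iffD2]] assms(2) by simp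

lemma has_sum_sum_finite:
  fixes f :: "'l \<Rightarrow> 'c \<Rightarrow> 'b :: topological_comm_monoid_add"
  assumes "finite L" "\<And>l. l \<in> L \<Longrightarrow> (f l has_sum s l) A"
  shows "((\<lambda>x. \<Sum>l\<in>L. f l x) has_sum (\<Sum>l\<in>L. s l)) A"
  using assms by (induction L rule: finite_induct) (auto intro: has_sum_add)

lemma has_sum_of_real_nonneg:
  assumes "((\<lambda>m. complex_of_real (r m)) has_sum q) A" "\<And>m. m \<in> A \<Longrightarrow> r m \<ge> 0"
  shows "Im q = 0" and "Re q \<ge> 0"
proof -
  have "((\<lambda>_. 0) has_sum Im q) A" using has_sum_Im[OF assms(1)] by simp
  moreover have "((\<lambda>_. 0) has_sum (0 :: real)) A" by (rule has_sum_0) simp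
  ultimately show "Im q = 0" by (rule has_sum_unique)
  show "Re q \<ge> 0"
    using has_sum_Re[OF assms(1)] assms(2) by (simp add: has_sum_nonneg)
qed

lemma sum_sum_cinner_eq_l2norm:
  assumes "finite I" "\<And>i. i \<in> I \<Longrightarrow> a i \<in> l2"
  shows "(\<Sum>i\<in>I. \<Sum>j\<in>I. cinner (a i) (a j)) = complex_of_real ((l2norm (\<lambda>l. \<Sum>i\<in>I. a i l))\<^sup>2)"
proof -
  have "(\<Sum>i\<in>I. \<Sum>j\<in>I. cinner (a i) (a j)) = (\<Sum>i\<in>I. cinner (a i) (\<lambda>l. \<Sum>j\<in>I. a j l))"
    using assms by (simp add: cinner_sum_right)
  also have "\<dots> = cinner (\<lambda>l. \<Sum>i\<in>I. a i l) (\<lambda>l. \<Sum>j\<in>I. a j l)"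
    using assms by (simp add: cinner_sum_left l2_sum)
  finally show ?thesis using assms by (simp add: cinner_self l2_sum)
qed

lemma quadratic_form_bil_ampl:
  assumes g: "\<And>i j k. i < n \<Longrightarrow> j < n \<Longrightarrow> k < n \<Longrightarrow> g (X i k) (Y k j) \<in> bop"
    and \<xi>: "\<And>j. j < n \<Longrightarrow> \<xi> j \<in> l2"
  shows "(\<Sum>i<n. cinner (\<xi> i) (mat_apply n (bil_ampl n g X Y) \<xi> i))
    = (\<Sum>i<n. \<Sum>j<n. \<Sum>k<n. cinner (\<xi> i) (g (X i k) (Y k j) (\<xi> j)))"
proof (rule sum.cong[OF refl])
  fix i assume "i \<in> {..<n}"
  then have i: "i < n" by simp
  have l2: "g (X i k) (Y k j) (\<xi> j) \<in> l2" if "j < n" "k < n" for j k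
    using g[OF i that(1,2)] \<xi>[OF that(1)] by (rule bop_l2)
  have "cinner (\<xi> i) (\<lambda>l. \<Sum>j<n. \<Sum>k<n. g (X i k) (Y k j) (\<xi> j) l)
      = (\<Sum>j<n. cinner (\<xi> i) (\<lambda>l. \<Sum>k<n. g (X i k) (Y k j) (\<xi> j) l))"
    by (rule cinner_sum_right) (auto intro: \<xi> i l2_sum l2)
  also have "\<dots> = (\<Sum>j<n. \<Sum>k<n. cinner (\<xi> i) (g (X i k) (Y k j) (\<xi> j)))"
    by (intro sum.cong refl cinner_sum_right) (auto intro: \<xi> i l2)
  finally show "cinner (\<xi> i) (mat_apply n (bil_ampl n g X Y) \<xi> i)
      = (\<Sum>j<n. \<Sum>k<n. cinner (\<xi> i) (g (X i k) (Y k j) (\<xi> j)))"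
    by (simp add: mat_apply_def bil_ampl_def)
qed

text \<open>The Christensen--Sinclair form sum_j V_j(x) V_j(y* )* of a completely positive bilinear
  map.\<close>
definition gram_map :: "'c set \<Rightarrow> ('c \<Rightarrow> 'a op \<Rightarrow> 'b op) \<Rightarrow> 'a op \<Rightarrow> 'a op \<Rightarrow> 'b op" where
  "gram_map \<Lambda> V x y = weak_opsum \<Lambda> (\<lambda>j. V j x \<circ> adj (V j (adj y)))"

locale row_bounded_family =
  fixes M :: "'a op set" and N :: "'b op set" and \<Lambda> :: "'c set"
    and V :: "'c \<Rightarrow> 'a op \<Rightarrow> 'b op" and K :: real
  assumes vn_M: "von_neumann_algebra M" and vn_N: "von_neumann_algebra N"
    and linear_V: "\<And>j. j \<in> \<Lambda> \<Longrightarrow> linear_map M N (V j)"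
    and K_nonneg: "K \<ge> 0"
    and row_bound: "\<And>x \<eta> F. x \<in> M \<Longrightarrow> \<eta> \<in> l2 \<Longrightarrow> finite F \<Longrightarrow> F \<subseteq> \<Lambda> \<Longrightarrow>
          (\<Sum>j\<in>F. (l2norm (adj (V j x) \<eta>))\<^sup>2) \<le> K * (opnorm x)\<^sup>2 * (l2norm \<eta>)\<^sup>2"
begin

lemma V_in_N: "j \<in> \<Lambda> \<Longrightarrow> x \<in> M \<Longrightarrow> V j x \<in> N"
  using linear_V by (auto simp: linear_map_def)

lemma V_bop: "j \<in> \<Lambda> \<Longrightarrow> x \<in> M \<Longrightarrow> V j x \<in> bop"
  using V_in_N vn_bop[OF vn_N] by blast

lemma V_lincomb:
  "j \<in> \<Lambda> \<Longrightarrow> x \<in> M \<Longrightarrow> x' \<in> M \<Longrightarrow>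
    V j (\<lambda>\<xi> i. a * x \<xi> i + x' \<xi> i) = (\<lambda>\<xi> i. a * V j x \<xi> i + V j x' \<xi> i)"
  using linear_V by (auto simp: linear_map_def op_add_def op_scale_def)

lemma adj_V_bop: "j \<in> \<Lambda> \<Longrightarrow> x \<in> M \<Longrightarrow> adj (V j x) \<in> bop"
  by (rule adj_bop[OF V_bop])

lemma gram_terms_weakly_abs_summable:
  assumes x: "x \<in> M" and y: "y \<in> M"
  shows "weakly_abs_summable \<Lambda> (\<lambda>j. V j x \<circ> adj (V j (adj y))) (K * opnorm x * opnorm y)"
  unfolding weakly_abs_summable_def
proof (intro conjI ballI allI impI)
  have y': "adj y \<in> M" by (rule vn_adj[OF vn_M y])
  show "V j x \<circ> adj (V j (adj y)) \<in> bop" if "j \<in> \<Lambda>" for j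
    by (intro bop_comp V_bop adj_V_bop that x y')
  fix \<xi> \<eta> :: "'b vec" and F assume \<xi>: "\<xi> \<in> l2" and \<eta>: "\<eta> \<in> l2" and F: "finite F \<and> F \<subseteq> \<Lambda>"
  have x0: "opnorm x \<ge> 0" and y0: "opnorm (adj y) \<ge> 0"
    using x y' vn_bop[OF vn_M] opnorm_nonneg by blast+
  have "(\<Sum>j\<in>F. cmod (cinner \<eta> ((V j x \<circ> adj (V j (adj y))) \<xi>)))
      \<le> sqrt (\<Sum>j\<in>F. (l2norm (adj (V j x) \<eta>))\<^sup>2) * sqrt (\<Sum>j\<in>F. (l2norm (adj (V j (adj y)) \<xi>))\<^sup>2)"
    unfolding comp_apply
    by (rule sum_cmod_cinner_comp_le) (use F x y' \<xi> \<eta> in \<open>auto intro: V_bop adj_V_bop\<close>)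
  also have "\<dots> \<le> sqrt (K * (opnorm x)\<^sup>2 * (l2norm \<eta>)\<^sup>2) * sqrt (K * (opnorm (adj y))\<^sup>2 * (l2norm \<xi>)\<^sup>2)"
    using F K_nonneg by (intro mult_mono real_sqrt_le_mono row_bound x y' \<xi> \<eta>) (auto simp: sum_nonneg)
  also have "\<dots> = K * opnorm x * opnorm (adj y) * l2norm \<xi> * l2norm \<eta>"
    using K_nonneg x0 y0 by (simp add: real_sqrt_mult l2norm_nonneg)
  also have "\<dots> \<le> K * opnorm x * opnorm y * l2norm \<xi> * l2norm \<eta>"
    using opnorm_adj_le[OF vn_bop[OF vn_M y]] K_nonneg x0
    by (intro mult_right_mono mult_left_mono) (auto simp: l2norm_nonneg)
  finally show "(\<Sum>j\<in>F. cmod (cinner \<eta> ((V j x \<circ> adj (V j (adj y))) \<xi>)))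
      \<le> K * opnorm x * opnorm y * l2norm \<xi> * l2norm \<eta>" .
qed

lemma gram_map_in_N: "x \<in> M \<Longrightarrow> y \<in> M \<Longrightarrow> gram_map \<Lambda> V x y \<in> N"
  unfolding gram_map_def
  by (intro weak_opsum_in_vn[OF vn_N gram_terms_weakly_abs_summable] vn_comp[OF vn_N] V_in_N vn_adj[OF vn_N]
      vn_adj[OF vn_M])

lemma gram_map_bop: "x \<in> M \<Longrightarrow> y \<in> M \<Longrightarrow> gram_map \<Lambda> V x y \<in> bop"
  using gram_map_in_N vn_bop[OF vn_N] by blast

lemma gram_map_lincomb_left:
  assumes x: "x \<in> M" and x': "x' \<in> M" and y: "y \<in> M"
  shows "gram_map \<Lambda> V (\<lambda>\<xi> i. a * x \<xi> i + x' \<xi> i) y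
    = (\<lambda>\<xi> i. a * gram_map \<Lambda> V x y \<xi> i + gram_map \<Lambda> V x' y \<xi> i)"
proof -
  have "gram_map \<Lambda> V (\<lambda>\<xi> i. a * x \<xi> i + x' \<xi> i) y
      = weak_opsum \<Lambda> (\<lambda>j \<xi> l. a * (V j x \<circ> adj (V j (adj y))) \<xi> l + (V j x' \<circ> adj (V j (adj y))) \<xi> l)"
    unfolding gram_map_def by (rule weak_opsum_cong) (simp add: V_lincomb x x')
  also have "\<dots> = (\<lambda>\<xi> i. a * gram_map \<Lambda> V x y \<xi> i + gram_map \<Lambda> V x' y \<xi> i)"
    unfolding gram_map_def by (rule weak_opsum_lincomb[OF gram_terms_weakly_abs_summable gram_terms_weakly_abs_summable]) (fact x x' y)+
  finally show ?thesis .
qed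

lemma gram_map_lincomb_right:
  assumes x: "x \<in> M" and y: "y \<in> M" and y': "y' \<in> M"
  shows "gram_map \<Lambda> V x (\<lambda>\<xi> i. a * y \<xi> i + y' \<xi> i)
    = (\<lambda>\<xi> i. a * gram_map \<Lambda> V x y \<xi> i + gram_map \<Lambda> V x y' \<xi> i)"
proof -
  have My: "adj y \<in> M" "adj y' \<in> M" using y y' vn_adj[OF vn_M] by blast+
  have "adj (V j (adj (\<lambda>\<xi> i. a * y \<xi> i + y' \<xi> i)))
      = (\<lambda>\<xi> i. a * adj (V j (adj y)) \<xi> i + adj (V j (adj y')) \<xi> i)" if j: "j \<in> \<Lambda>" for j
    using adj_lincomb[OF vn_bop[OF vn_M y] vn_bop[OF vn_M y'], of a 1]
      adj_lincomb[OF V_bop[OF j My(1)] V_bop[OF j My(2)], of "cnj a" 1]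
    by (simp add: V_lincomb[OF j My])
  then have "gram_map \<Lambda> V x (\<lambda>\<xi> i. a * y \<xi> i + y' \<xi> i)
      = weak_opsum \<Lambda> (\<lambda>j \<xi> l. a * (V j x \<circ> adj (V j (adj y))) \<xi> l + (V j x \<circ> adj (V j (adj y'))) \<xi> l)"
    unfolding gram_map_def
    by (intro weak_opsum_cong)
      (simp add: bop_apply_lincomb[of _ _ _ a 1, simplified] V_bop x adj_V_bop My bop_l2)
  also have "\<dots> = (\<lambda>\<xi> i. a * gram_map \<Lambda> V x y \<xi> i + gram_map \<Lambda> V x y' \<xi> i)"
    unfolding gram_map_def by (rule weak_opsum_lincomb[OF gram_terms_weakly_abs_summable gram_terms_weakly_abs_summable]) (fact x y y')+
  finally show ?thesis .
qed

lemma gram_map_cont_bilinear: "cont_bilinear M N (gram_map \<Lambda> V)"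
  unfolding cont_bilinear_def bilinear_map_def op_add_def op_scale_def
proof (intro conjI ballI allI exI[of _ K])
  fix x y assume x: "x \<in> M" and y: "y \<in> M"
  show "gram_map \<Lambda> V x y \<in> N" by (rule gram_map_in_N[OF x y])
  show "opnorm (gram_map \<Lambda> V x y) \<le> K * opnorm x * opnorm y"
    unfolding gram_map_def by (rule weak_opsum_bop(2)[OF gram_terms_weakly_abs_summable[OF x y]])
qed (simp_all add: gram_map_lincomb_left gram_map_lincomb_right)

lemma gram_map_cinner_has_sum:
  assumes x: "x \<in> M" and y: "y \<in> M" and \<xi>: "\<xi> \<in> l2" and \<eta>: "\<eta> \<in> l2"
  shows "((\<lambda>j. cinner (adj (V j x) \<eta>) (adj (V j y) \<xi>)) has_sum cinner \<eta> (gram_map \<Lambda> V x (adj y) \<xi>)) \<Lambda>"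
proof -
  have y': "adj y \<in> M" by (rule vn_adj[OF vn_M y])
  have eq: "cinner \<eta> (V j x (adj (V j (adj (adj y))) \<xi>)) = cinner (adj (V j x) \<eta>) (adj (V j y) \<xi>)"
    if "j \<in> \<Lambda>" for j
    using that by (simp add: adj_adj vn_bop[OF vn_M y] cinner_adj_right V_bop x \<eta> adj_l2 y \<xi>)
  show ?thesis
    using weak_opsum_apply(3)[OF gram_terms_weakly_abs_summable[OF x y'] \<xi> \<eta>] unfolding gram_map_def
    by (rule has_sum_cong[THEN iffD1, rotated]) (simp add: eq)
qed

lemma gram_map_cp_bilinear: "cp_bilinear M (gram_map \<Lambda> V)"
  unfolding cp_bilinear_def mpos_def Let_def
proof (intro allI ballI impI)
  fix n X and \<xi> :: "nat \<Rightarrow> 'b vec"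
  assume X: "X \<in> mats n M" and \<xi>: "\<forall>j<n. \<xi> j \<in> l2"
  have XM: "X i k \<in> M" if "i < n" "k < n" for i k using X that by (auto simp: mats_def)
  define a where "a i k m = adj (V m (X i k)) (\<xi> i)" for i k m
  define q where "q = (\<Sum>i<n. cinner (\<xi> i) (mat_apply n (bil_ampl n (gram_map \<Lambda> V) X (madj X)) \<xi> i))"
  have "q = (\<Sum>i<n. \<Sum>j<n. \<Sum>k<n. cinner (\<xi> i) (gram_map \<Lambda> V (X i k) (adj (X j k)) (\<xi> j)))"
    unfolding q_def using \<xi> by (subst quadratic_form_bil_ampl) (auto simp: madj_def intro: gram_map_bop XM vn_adj[OF vn_M])
  then have "((\<lambda>m. \<Sum>i<n. \<Sum>j<n. \<Sum>k<n. cinner (a i k m) (a j k m)) has_sum q) \<Lambda>"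
    using \<xi> by (simp only: a_def) (intro has_sum_sum_finite gram_map_cinner_has_sum XM; simp)
  moreover have eq: "(\<Sum>i<n. \<Sum>j<n. \<Sum>k<n. cinner (a i k m) (a j k m))
      = complex_of_real (\<Sum>k<n. (l2norm (\<lambda>l. \<Sum>i<n. a i k m l))\<^sup>2)" if m: "m \<in> \<Lambda>" for m
  proof -
    have "(\<Sum>i<n. \<Sum>j<n. \<Sum>k<n. cinner (a i k m) (a j k m)) = (\<Sum>i<n. \<Sum>k<n. \<Sum>j<n. cinner (a i k m) (a j k m))"
      by (intro sum.cong refl sum.swap)
    also have "\<dots> = (\<Sum>k<n. \<Sum>i<n. \<Sum>j<n. cinner (a i k m) (a j k m))"
      by (rule sum.swap)
    also have "\<dots> = (\<Sum>k<n. complex_of_real ((l2norm (\<lambda>l. \<Sum>i<n. a i k m l))\<^sup>2))"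
      using m \<xi> by (intro sum.cong refl sum_sum_cinner_eq_l2norm) (auto simp: a_def intro: adj_l2 V_bop XM)
    finally show ?thesis by simp
  qed
  ultimately have "((\<lambda>m. complex_of_real (\<Sum>k<n. (l2norm (\<lambda>l. \<Sum>i<n. a i k m l))\<^sup>2)) has_sum q) \<Lambda>"
    by (rule has_sum_cong[THEN iffD1, rotated]) (simp add: eq)
  from has_sum_of_real_nonneg[OF this] have "Im q = 0 \<and> Re q \<ge> 0"
    by (simp add: sum_nonneg)
  then show "Im (\<Sum>i<n. cinner (\<xi> i) (mat_apply n (bil_ampl n (gram_map \<Lambda> V) X (madj X)) \<xi> i)) = 0 \<and>
      0 \<le> Re (\<Sum>i<n. cinner (\<xi> i) (mat_apply n (bil_ampl n (gram_map \<Lambda> V) X (madj X)) \<xi> i))"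
    by (simp add: q_def)
qed

end

section \<open>Polarization of a type B factorization\<close>

locale type_B_factors =
  fixes M :: "'a op set" and N :: "'b op set" and \<Lambda> :: "'c set"
    and \<psi> \<theta> :: "'c \<Rightarrow> 'a op \<Rightarrow> 'b op" and K :: real
  assumes vn_M: "von_neumann_algebra M" and vn_N: "von_neumann_algebra N"
    and linear_\<psi>: "\<And>j. j \<in> \<Lambda> \<Longrightarrow> linear_map M N (\<psi> j)"
    and linear_\<theta>: "\<And>j. j \<in> \<Lambda> \<Longrightarrow> linear_map M N (\<theta> j)"
    and K_nonneg: "K \<ge> 0"
    and row_bound_\<psi>: "\<And>x F. x \<in> M \<Longrightarrow> finite F \<Longrightarrow> F \<subseteq> \<Lambda> \<Longrightarrow>
          opnorm (\<lambda>\<xi> l. \<Sum>j\<in>F. (\<psi> j x \<circ> adj (\<psi> j x)) \<xi> l) \<le> K * (opnorm x)\<^sup>2"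
    and column_bound_\<theta>: "\<And>y F. y \<in> M \<Longrightarrow> finite F \<Longrightarrow> F \<subseteq> \<Lambda> \<Longrightarrow>
          opnorm (\<lambda>\<xi> l. \<Sum>j\<in>F. (adj (\<theta> j y) \<circ> \<theta> j y) \<xi> l) \<le> K * (opnorm y)\<^sup>2"
begin

lemma \<psi>_in_N: "j \<in> \<Lambda> \<Longrightarrow> x \<in> M \<Longrightarrow> \<psi> j x \<in> N"
  using linear_\<psi> by (auto simp: linear_map_def)

lemma \<theta>_in_N: "j \<in> \<Lambda> \<Longrightarrow> x \<in> M \<Longrightarrow> \<theta> j x \<in> N"
  using linear_\<theta> by (auto simp: linear_map_def)

lemma \<psi>_bop: "j \<in> \<Lambda> \<Longrightarrow> x \<in> M \<Longrightarrow> \<psi> j x \<in> bop"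
  using \<psi>_in_N vn_bop[OF vn_N] by blast

lemma \<theta>_bop: "j \<in> \<Lambda> \<Longrightarrow> x \<in> M \<Longrightarrow> \<theta> j x \<in> bop"
  using \<theta>_in_N vn_bop[OF vn_N] by blast

lemma adj_in_M: "x \<in> M \<Longrightarrow> adj x \<in> M"
  by (rule vn_adj[OF vn_M])

lemma M_bop: "x \<in> M \<Longrightarrow> x \<in> bop"
  by (rule vn_bop[OF vn_M])

text \<open>For c in {1, -1, i, -i} the Gram maps of these operators polarize the products
  psi_j(x) theta_j(y).\<close>
definition polar_op :: "complex \<Rightarrow> 'c \<Rightarrow> 'a op \<Rightarrow> 'b op" where
  "polar_op c j x = (\<lambda>\<xi> l. (1/2) * \<psi> j x \<xi> l + (c/2) * adj (\<theta> j (adj x)) \<xi> l)"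

lemma adj_polar_op:
  assumes "j \<in> \<Lambda>" "x \<in> M"
  shows "adj (polar_op c j x) = (\<lambda>\<xi> l. (1/2) * adj (\<psi> j x) \<xi> l + (cnj c/2) * \<theta> j (adj x) \<xi> l)"
  unfolding polar_op_def
  using adj_lincomb[OF \<psi>_bop adj_bop[OF \<theta>_bop], of j x j "adj x" "1/2" "c/2"] assms
  by (simp add: adj_adj \<theta>_bop adj_in_M)

lemma polar_op_linear: "j \<in> \<Lambda> \<Longrightarrow> linear_map M N (polar_op c j)"
  unfolding linear_map_def op_add_def op_scale_def
proof (intro conjI ballI allI)
  fix x assume "j \<in> \<Lambda>" "x \<in> M"
  then show "polar_op c j x \<in> N"
    unfolding polar_op_def by (intro vn_lincomb[OF vn_N] \<psi>_in_N vn_adj[OF vn_N] \<theta>_in_N adj_in_M)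
next
  fix x x' a assume j: "j \<in> \<Lambda>" and x: "x \<in> M" and x': "x' \<in> M"
  have "adj (\<theta> j (adj (\<lambda>\<xi> i. a * x \<xi> i + x' \<xi> i)))
      = (\<lambda>\<xi> i. a * adj (\<theta> j (adj x)) \<xi> i + adj (\<theta> j (adj x')) \<xi> i)"
    using adj_lincomb[OF M_bop[OF x] M_bop[OF x'], of a 1]
      adj_lincomb[OF \<theta>_bop[OF j adj_in_M[OF x]] \<theta>_bop[OF j adj_in_M[OF x']], of "cnj a" 1]
      linear_\<theta>[OF j] adj_in_M[OF x] adj_in_M[OF x']
    by (simp add: linear_map_def op_add_def op_scale_def)
  moreover have "\<psi> j (\<lambda>\<xi> i. a * x \<xi> i + x' \<xi> i) = (\<lambda>\<xi> i. a * \<psi> j x \<xi> i + \<psi> j x' \<xi> i)"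
    using linear_\<psi>[OF j] x x' by (simp add: linear_map_def op_add_def op_scale_def)
  ultimately show "polar_op c j (\<lambda>\<xi> i. a * x \<xi> i + x' \<xi> i)
      = (\<lambda>\<xi> i. a * polar_op c j x \<xi> i + polar_op c j x' \<xi> i)"
    by (simp add: polar_op_def algebra_simps)
qed

lemma sum_l2norm_adj_\<psi>_le:
  assumes "x \<in> M" "\<eta> \<in> l2" "finite F" "F \<subseteq> \<Lambda>"
  shows "(\<Sum>j\<in>F. (l2norm (adj (\<psi> j x) \<eta>))\<^sup>2) \<le> K * (opnorm x)\<^sup>2 * (l2norm \<eta>)\<^sup>2"
proof -
  have "(\<Sum>j\<in>F. (l2norm (adj (\<psi> j x) \<eta>))\<^sup>2)
      \<le> opnorm (\<lambda>\<xi> l. \<Sum>j\<in>F. (adj (adj (\<psi> j x)) \<circ> adj (\<psi> j x)) \<xi> l) * (l2norm \<eta>)\<^sup>2"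
    using assms by (intro sum_l2norm_power2_le_opnorm adj_bop \<psi>_bop) auto
  also have "\<dots> = opnorm (\<lambda>\<xi> l. \<Sum>j\<in>F. (\<psi> j x \<circ> adj (\<psi> j x)) \<xi> l) * (l2norm \<eta>)\<^sup>2"
    using assms by (simp add: adj_adj \<psi>_bop subsetD cong: sum.cong)
  also have "\<dots> \<le> K * (opnorm x)\<^sup>2 * (l2norm \<eta>)\<^sup>2"
    using assms by (intro mult_right_mono row_bound_\<psi>) auto
  finally show ?thesis .
qed

lemma sum_l2norm_\<theta>_le:
  assumes "y \<in> M" "\<eta> \<in> l2" "finite F" "F \<subseteq> \<Lambda>"
  shows "(\<Sum>j\<in>F. (l2norm (\<theta> j y \<eta>))\<^sup>2) \<le> K * (opnorm y)\<^sup>2 * (l2norm \<eta>)\<^sup>2"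
  using assms
  by (intro order_trans[OF sum_l2norm_power2_le_opnorm] mult_right_mono column_bound_\<theta> \<theta>_bop)
    auto

lemma polar_op_row_bounded:
  assumes c: "cmod c = 1"
  shows "row_bounded_family M N \<Lambda> (polar_op c) K"
proof
  fix x \<eta> F assume x: "x \<in> M" and \<eta>: "\<eta> \<in> (l2 :: 'b vec set)" and F: "finite F" "F \<subseteq> \<Lambda>"
  have "(\<Sum>j\<in>F. (l2norm (adj (polar_op c j x) \<eta>))\<^sup>2)
      \<le> (\<Sum>j\<in>F. (1/2) * (l2norm (adj (\<psi> j x) \<eta>))\<^sup>2 + (1/2) * (l2norm (\<theta> j (adj x) \<eta>))\<^sup>2)"
  proof (rule sum_mono)
    fix j assume j: "j \<in> F"
    then have "j \<in> \<Lambda>" using F by blast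
    then show "(l2norm (adj (polar_op c j x) \<eta>))\<^sup>2
        \<le> (1/2) * (l2norm (adj (\<psi> j x) \<eta>))\<^sup>2 + (1/2) * (l2norm (\<theta> j (adj x) \<eta>))\<^sup>2"
      using l2norm_lincomb_power2_le(2)[OF adj_l2[OF \<psi>_bop \<eta>] bop_l2[OF \<theta>_bop \<eta>],
          of j x j "adj x" "1/2" "cnj c/2"] c
      by (simp add: adj_polar_op x adj_in_M norm_divide power_divide)
  qed
  also have "\<dots> \<le> (1/2) * (K * (opnorm x)\<^sup>2 * (l2norm \<eta>)\<^sup>2) + (1/2) * (K * (opnorm (adj x))\<^sup>2 * (l2norm \<eta>)\<^sup>2)"
    unfolding sum.distrib sum_distrib_left[symmetric]
    by (intro add_mono mult_left_mono sum_l2norm_adj_\<psi>_le sum_l2norm_\<theta>_le x adj_in_M \<eta> F) auto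
  also have "\<dots> \<le> K * (opnorm x)\<^sup>2 * (l2norm \<eta>)\<^sup>2"
  proof -
    have "(opnorm (adj x))\<^sup>2 \<le> (opnorm x)\<^sup>2"
      using opnorm_adj_le[OF M_bop[OF x]] opnorm_nonneg[OF adj_bop[OF M_bop[OF x]]]
      by (rule power_mono)
    then have "K * (opnorm (adj x))\<^sup>2 * (l2norm \<eta>)\<^sup>2 \<le> K * (opnorm x)\<^sup>2 * (l2norm \<eta>)\<^sup>2"
      using K_nonneg by (intro mult_right_mono mult_left_mono) auto
    then show ?thesis by simp
  qed
  finally show "(\<Sum>j\<in>F. (l2norm (adj (polar_op c j x) \<eta>))\<^sup>2) \<le> K * (opnorm x)\<^sup>2 * (l2norm \<eta>)\<^sup>2" .
qed (fact vn_M vn_N polar_op_linear K_nonneg)+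

lemma gram_map_polar_op_cont_cp:
  assumes "cmod c = 1"
  shows "cont_bilinear M N (gram_map \<Lambda> (polar_op c)) \<and> cp_bilinear M (gram_map \<Lambda> (polar_op c))"
  using row_bounded_family.gram_map_cont_bilinear row_bounded_family.gram_map_cp_bilinear
    polar_op_row_bounded[OF assms] by blast

lemma polarization_identity:
  fixes l :: 'b
  assumes j: "j \<in> \<Lambda>" and x: "x \<in> M" and y: "y \<in> M" and \<xi>: "\<xi> \<in> l2"
  defines "P \<equiv> \<lambda>c. (polar_op c j x \<circ> adj (polar_op c j (adj y))) \<xi> l"
  shows "\<psi> j x (\<theta> j y \<xi>) l = P 1 - P (-1) + \<i> * (P \<i> - P (-\<i>))"
proof -
  define u where "u = adj (\<psi> j (adj y)) \<xi>"
  have u: "u \<in> l2" and v: "\<theta> j y \<xi> \<in> l2"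
    unfolding u_def using j y \<xi> by (auto intro: adj_l2 bop_l2 \<psi>_bop \<theta>_bop adj_in_M)
  have "P c = (1/4) * \<psi> j x u l + (cnj c/4) * \<psi> j x (\<theta> j y \<xi>) l
      + (c/4) * adj (\<theta> j (adj x)) u l + (c * cnj c/4) * adj (\<theta> j (adj x)) (\<theta> j y \<xi>) l" for c
  proof -
    have "adj (polar_op c j (adj y)) \<xi> = (\<lambda>i. (1/2) * u i + (cnj c/2) * \<theta> j y \<xi> i)"
      by (simp add: adj_polar_op j y adj_in_M adj_adj M_bop u_def)
    then show ?thesis
      unfolding P_def comp_apply
      using bop_apply_lincomb[OF \<psi>_bop[OF j x] u v, of "1/2" "cnj c/2"]
        bop_apply_lincomb[OF adj_bop[OF \<theta>_bop[OF j adj_in_M[OF x]]] u v, of "1/2" "cnj c/2"]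
      by (simp add: polar_op_def field_simps)
  qed
  then show ?thesis by (simp add: algebra_simps)
qed

lemma factorization_polarization:
  assumes x: "x \<in> M" and y: "y \<in> M" and \<Phi>: "\<Phi> \<in> bop"
    and factors: "\<And>\<xi> \<eta>. \<xi> \<in> l2 \<Longrightarrow> \<eta> \<in> l2 \<Longrightarrow>
          ((\<lambda>j. cinner \<eta> (\<psi> j x (\<theta> j y \<xi>))) has_sum cinner \<eta> (\<Phi> \<xi>)) \<Lambda>"
  defines "G \<equiv> \<lambda>c. gram_map \<Lambda> (polar_op c) x y"
  shows "\<Phi> = (\<lambda>\<xi> l. G 1 \<xi> l - G (-1) \<xi> l + \<i> * (G \<i> \<xi> l - G (-\<i>) \<xi> l))"
proof (intro ext)
  fix \<xi> l
  show "\<Phi> \<xi> l = G 1 \<xi> l - G (-1) \<xi> l + \<i> * (G \<i> \<xi> l - G (-\<i>) \<xi> l)"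
  proof (cases "\<xi> \<in> l2")
    case True
    have G: "((\<lambda>j. (polar_op c j x \<circ> adj (polar_op c j (adj y))) \<xi> l) has_sum G c \<xi> l) \<Lambda>"
      if "cmod c = 1" for c
      unfolding G_def gram_map_def
      using row_bounded_family.gram_terms_weakly_abs_summable[OF polar_op_row_bounded[OF that] x y]
      by (rule has_sum_weak_opsum) (fact True)
    have "((\<lambda>j. \<psi> j x (\<theta> j y \<xi>) l) has_sum (G 1 \<xi> l - G (-1) \<xi> l + \<i> * (G \<i> \<xi> l - G (-\<i>) \<xi> l))) \<Lambda>"
      using has_sum_add[OF has_sum_diff[OF G G] has_sum_cmult_right[OF has_sum_diff[OF G G]]]
      by (rule has_sum_cong[THEN iffD1, rotated]) (simp_all add: polarization_identity x y True)
    moreover have "((\<lambda>j. \<psi> j x (\<theta> j y \<xi>) l) has_sum \<Phi> \<xi> l) \<Lambda>"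
      using factors[OF True l2_basis_vec] by simp
    ultimately show ?thesis by (rule has_sum_unique[rotated])
  next
    case False
    then show ?thesis by (simp add: bop_off[OF \<Phi>] G_def gram_map_def weak_opsum_def)
  qed
qed

end

lemma type_B_factors_of_factorization:
  assumes "von_neumann_algebra M" "von_neumann_algebra N"
    and "type_B_factorization M N \<phi> \<Lambda> \<psi> \<theta> K"
  shows "type_B_factors M N \<Lambda> \<psi> \<theta> (max K 0)"
proof
  have "K * (opnorm x)\<^sup>2 \<le> max K 0 * (opnorm x)\<^sup>2" for x :: "'a op"
    by (rule mult_right_mono) auto
  then show "opnorm (\<lambda>\<xi> l. \<Sum>j\<in>F. (\<psi> j x \<circ> adj (\<psi> j x)) \<xi> l) \<le> max K 0 * (opnorm x)\<^sup>2"
    and "opnorm (\<lambda>\<xi> l. \<Sum>j\<in>F. (adj (\<theta> j x) \<circ> \<theta> j x) \<xi> l) \<le> max K 0 * (opnorm x)\<^sup>2"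
    if "x \<in> M" "finite F" "F \<subseteq> \<Lambda>" for x F
    using assms(3) that unfolding type_B_factorization_def by (meson order_trans)+
qed (use assms in \<open>auto simp: type_B_factorization_def cb_linear_def\<close>)

theorem lemma5p1:
  fixes M :: "'a op set" and N :: "'b op set"
    and \<phi> :: "'a op \<Rightarrow> 'a op \<Rightarrow> 'b op"
    and \<Lambda> :: "'c set" and \<psi> \<theta> :: "'c \<Rightarrow> 'a op \<Rightarrow> 'b op" and K :: real
  assumes "von_neumann_algebra M" and "von_neumann_algebra N"
    and "cb_bilinear M N \<phi>"
    and "type_B_factorization M N \<phi> \<Lambda> \<psi> \<theta> K"
  shows "\<exists>\<phi>1 \<phi>2 \<phi>3 \<phi>4 :: 'a op \<Rightarrow> 'a op \<Rightarrow> 'b op.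
           (\<forall>g\<in>{\<phi>1, \<phi>2, \<phi>3, \<phi>4}. cont_bilinear M N g \<and> cp_bilinear M g)
         \<and> (\<forall>x\<in>M. \<forall>y\<in>M. \<phi> x y =
              (\<lambda>\<xi> l. \<phi>1 x y \<xi> l - \<phi>2 x y \<xi> l + \<i> * (\<phi>3 x y \<xi> l - \<phi>4 x y \<xi> l)))"
proof -
  interpret type_B_factors M N \<Lambda> \<psi> \<theta> "max K 0"
    using assms(1,2,4) by (rule type_B_factors_of_factorization)
  define G where "G c = gram_map \<Lambda> (polar_op c)" for c
  have "cont_bilinear M N (G c) \<and> cp_bilinear M (G c)" if "cmod c = 1" for c
    unfolding G_def using that by (rule gram_map_polar_op_cont_cp)
  moreover have "\<phi> x y = (\<lambda>\<xi> l. G 1 x y \<xi> l - G (-1) x y \<xi> l + \<i> * (G \<i> x y \<xi> l - G (-\<i>) x y \<xi> l))"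
    if "x \<in> M" "y \<in> M" for x y
    unfolding G_def
  proof (rule factorization_polarization[OF that])
    txt \<open>Complete boundedness of phi is needed only here: it makes phi x y a bounded operator,
      which by the normalisation of bop vanishes off l2.\<close>
    show "\<phi> x y \<in> bop"
      using assms(3) that vn_bop[OF assms(2)] by (auto simp: cb_bilinear_def bilinear_map_def)
    show "((\<lambda>j. cinner \<eta> (\<psi> j x (\<theta> j y \<xi>))) has_sum cinner \<eta> (\<phi> x y \<xi>)) \<Lambda>"
      if "\<xi> \<in> l2" "\<eta> \<in> l2" for \<xi> \<eta>
      using assms(4) \<open>x \<in> M\<close> \<open>y \<in> M\<close> that by (simp add: type_B_factorization_def)
  qed
  ultimately show ?thesis
    by (intro exI[of _ "G 1"] exI[of _ "G (-1)"] exI[of _ "G \<i>"] exI[of _ "G (-\<i>)"]) auto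
qed

end
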